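(* Let $\mathbf{F}$ be a finite field with $q$ elements, $0\le r\le n$, and $V_j=\operatorname{span}(b_1,\dots,b_j)\subseteq\mathbf{F}^n$ for the standard basis. Let $T_r\colon V_r\to V_n$ be a semi-idempotent partial linear map with domain $V_r$. For $0\le\ell\le n-r$ and $0\le j\le r$ define \[ h_\ell(j,T_r)=q^{\ell j}\sum_{\substack{S\colon V_{n-\ell}\to V_{n-\ell}\ \text{semi-idempotent}\\ \operatorname{rank}S\le j,\ S|_{V_r}=T_r}}\mu(\mathrm{srk}\,S)\binom{n-\ell-\operatorname{rank}S}{j-\operatorname{rank}S}_q . \] Then $h_\ell(j,T_r)$ does not depend on $\ell$.
   Context: A partial linear map on $V$ is a linear map from a subspace of $V$ to $V$; composition $T\circ S$ has domain $S^{-1}(\operatorname{dom}T)$. A partial linear map $T$ is semi-idempotent if for some $N$ it acts as the identity on $\operatorname{im}T^N$; for an operator $S\colon V\to V$ this means $V=X\oplus Y$ with $X,Y$ $S$-stable, $S|_X=\mathrm{id}$, $S|_Y$ nilpotent. The condition $S|_{V_r}=T_r$ means $S(v)=T_r(v)$ for $v\in V_r$ (so it forces $\operatorname{im}T_r\subseteq V_{n-\ell}$). $\mathrm{srk}\,S$ is the rank of $S^i$ for $i\gg0$. $\mu(i)=(-1)^iq^{\binom i2}$; $\binom ab_q$ is the $q$-binomial coefficient. *)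

theory Defs
  imports Complex_Main "HOL-Library.Function_Algebras" "HOL-Library.FuncSet"
begin

text \<open>Ambient vectors: functions nat => F. The coordinate space F^n is V n,
  and V j = span(b_1,...,b_j) (0-based coordinates 0..j-1).\<close>

definition V :: "nat \<Rightarrow> (nat \<Rightarrow> 'a::zero) set" where
  "V j = {v. \<forall>i\<ge>j. v i = 0}"

definition scl :: "'a::field \<Rightarrow> (nat \<Rightarrow> 'a) \<Rightarrow> (nat \<Rightarrow> 'a)" where
  "scl c v = (\<lambda>i. c * v i)"

definition lin_on :: "(nat \<Rightarrow> 'a::field) set \<Rightarrow> ((nat \<Rightarrow> 'a) \<Rightarrow> (nat \<Rightarrow> 'a)) \<Rightarrow> bool" where
  "lin_on D T \<longleftrightarrow> (\<forall>u\<in>D. \<forall>v\<in>D. T (u + v) = T u + T v) \<and> (\<forall>c. \<forall>v\<in>D. T (scl c v) = scl c (T v))"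

text \<open>Powers of a partial map T with domain D on ambient space A:
  T^0 is the identity of A (domain A); dom T^(k+1) = (T^k)^{-1}(D).\<close>
fun pdom :: "(nat \<Rightarrow> 'a) set \<Rightarrow> (nat \<Rightarrow> 'a) set \<Rightarrow> ((nat \<Rightarrow> 'a) \<Rightarrow> (nat \<Rightarrow> 'a)) \<Rightarrow> nat \<Rightarrow> (nat \<Rightarrow> 'a) set" where
  "pdom A D T 0 = A"
| "pdom A D T (Suc k) = {v \<in> pdom A D T k. (T ^^ k) v \<in> D}"

definition semi_idem :: "(nat \<Rightarrow> 'a) set \<Rightarrow> (nat \<Rightarrow> 'a) set \<Rightarrow> ((nat \<Rightarrow> 'a) \<Rightarrow> (nat \<Rightarrow> 'a)) \<Rightarrow> bool" where
  "semi_idem A D T \<longleftrightarrow> (\<exists>N. \<forall>w \<in> (T ^^ N) ` pdom A D T N. w \<in> D \<and> T w = w)"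

definition rk :: "(nat \<Rightarrow> 'a::field) set \<Rightarrow> ((nat \<Rightarrow> 'a) \<Rightarrow> (nat \<Rightarrow> 'a)) \<Rightarrow> nat" where
  "rk D S = Vector_Spaces.vector_space.dim scl (S ` D)"

definition srk :: "(nat \<Rightarrow> 'a::field) set \<Rightarrow> ((nat \<Rightarrow> 'a) \<Rightarrow> (nat \<Rightarrow> 'a)) \<Rightarrow> nat" where
  "srk D S = (THE r. \<exists>N. \<forall>i\<ge>N. rk D (S ^^ i) = r)"

definition mu :: "int \<Rightarrow> nat \<Rightarrow> int" where
  "mu q i = (-1) ^ i * q ^ (i choose 2)"

fun qbinom :: "int \<Rightarrow> nat \<Rightarrow> nat \<Rightarrow> int" where
  "qbinom q a 0 = 1"
| "qbinom q 0 (Suc b) = 0"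
| "qbinom q (Suc a) (Suc b) = qbinom q a b + q ^ Suc b * qbinom q a (Suc b)"

text \<open>Linear operators V_m -> V_m, each represented by its unique extensional function.\<close>
definition ops :: "nat \<Rightarrow> ((nat \<Rightarrow> 'a::field) \<Rightarrow> (nat \<Rightarrow> 'a)) set" where
  "ops m = {S. lin_on (V m) S \<and> S ` V m \<subseteq> V m \<and> S \<in> extensional (V m)}"

definition h :: "nat \<Rightarrow> nat \<Rightarrow> nat \<Rightarrow> nat \<Rightarrow> ((nat \<Rightarrow> 'a::{field,finite}) \<Rightarrow> (nat \<Rightarrow> 'a)) \<Rightarrow> int" where
  "h n r l j T = (let q = int (card (UNIV :: 'a set)); m = n - l in
     q ^ (l * j) * (\<Sum>S \<in> {S \<in> ops m. semi_idem (V m) (V m) S \<and> rk (V m) S \<le> j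
                              \<and> (\<forall>v \<in> V r. S v = T v)}.
        mu q (srk (V m) S) * qbinom q (m - rk (V m) S) (j - rk (V m) S)))"

end

(*
  Write an operator S on E = V (Suc k) as ext_op P v: its restriction P to the hyperplane
  K = V k together with its value v = S e on the last basis vector e.  The core identity is that
  for every P the Mobius weights mu (srk S) of the semi-idempotent extensions S cancel when
  summed over all v.  If P maps K into itself, then psi (S w) = psi w * psi v for the last
  coordinate psi, so only psi v = 0 or 1 contribute, and a direct count gives
  |K| mu s + |im (id - P)| mu (s + 1) = 0, with s the dimension of the fixed space of P.
  Otherwise one argues by induction on E: a nonzero vector in the kernel of P can be factored
  out, while for injective P the extensions with v outside P K are injective and hence not
  semi-idempotent, and those with v in P K reduce to the same identity on K for the functional
  psi o P.  Weighting by q-binomials in the rank, the extensions of an endomorphism of K then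
  contribute q^j times its own weight (by the q-Pascal rule), and those of a non-endomorphism
  cancel, so h is unchanged when l increases by one.
*)

theory Submission
  imports Defs "HOL-Library.Cardinality"
begin

interpretation vs: vector_space "scl :: 'a::field \<Rightarrow> (nat \<Rightarrow> 'a) \<Rightarrow> (nat \<Rightarrow> 'a)"
  by unfold_locales (auto simp: scl_def fun_eq_iff algebra_simps)

context
  fixes E :: "(nat \<Rightarrow> 'a::field) set" and f :: "(nat \<Rightarrow> 'a) \<Rightarrow> (nat \<Rightarrow> 'a)"
  assumes subspace: "vs.subspace E" and lin: "lin_on E f"
begin

lemma lin_on_add: "u \<in> E \<Longrightarrow> v \<in> E \<Longrightarrow> f (u + v) = f u + f v"
  using lin by (simp add: lin_on_def)

lemma lin_on_scl: "v \<in> E \<Longrightarrow> f (scl c v) = scl c (f v)"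
  using lin by (simp add: lin_on_def)

lemma lin_on_zero: "f 0 = 0"
proof -
  have "f (scl 0 0) = scl 0 (f 0)"
    using lin_on_scl vs.subspace_0[OF subspace] by blast
  then show ?thesis by simp
qed

lemma lin_on_neg: "v \<in> E \<Longrightarrow> f (- v) = - f v"
  using lin_on_scl[where c = "-1"] by simp

lemma lin_on_diff: "u \<in> E \<Longrightarrow> v \<in> E \<Longrightarrow> f (u - v) = f u - f v"
  using lin_on_add[of u "- v"] lin_on_neg[of v] vs.subspace_neg[OF subspace] by simp

lemma subspace_lin_on_image: "vs.subspace (f ` E)"
  unfolding vs.subspace_def
proof (intro conjI ballI allI)
  show "0 \<in> f ` E"
    using lin_on_zero vs.subspace_0[OF subspace] by (metis image_eqI)
next
  fix x y assume "x \<in> f ` E" "y \<in> f ` E"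
  then obtain u v where "u \<in> E" "v \<in> E" "x = f u" "y = f v" by blast
  then show "x + y \<in> f ` E"
    using lin_on_add vs.subspace_add[OF subspace] by (metis image_eqI)
next
  fix c x assume "x \<in> f ` E"
  then obtain u where "u \<in> E" "x = f u" by blast
  then show "scl c x \<in> f ` E"
    using lin_on_scl vs.subspace_scale[OF subspace] by (metis image_eqI)
qed

lemma subspace_lin_on_kernel: "vs.subspace {w\<in>E. f w = 0}"
  unfolding vs.subspace_def
  using lin_on_zero lin_on_add lin_on_scl vs.subspace_0[OF subspace]
    vs.subspace_add[OF subspace] vs.subspace_scale[OF subspace] by auto

lemma card_lin_on_fiber:
  assumes "y \<in> f ` E"
  shows "card {w\<in>E. f w = y} = card {w\<in>E. f w = 0}"
proof -
  obtain x where x: "x \<in> E" "y = f x" using assms by auto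
  have "bij_betw (\<lambda>w. w - x) {w\<in>E. f w = y} {w\<in>E. f w = 0}"
    by (rule bij_betwI[where g = "\<lambda>w. w + x"])
      (use x lin_on_diff lin_on_add vs.subspace_diff[OF subspace] vs.subspace_add[OF subspace] in auto)
  then show ?thesis by (rule bij_betw_same_card)
qed

lemma sum_comp_lin_on:
  fixes g :: "(nat \<Rightarrow> 'a) \<Rightarrow> 'c::comm_semiring_1"
  assumes "finite E"
  shows "(\<Sum>w\<in>E. g (f w)) = of_nat (card {w\<in>E. f w = 0}) * (\<Sum>y\<in>f ` E. g y)"
proof -
  have "(\<Sum>w\<in>E. g (f w)) = (\<Sum>y\<in>f ` E. \<Sum>w\<in>{w\<in>E. f w = y}. g (f w))"
    by (rule sum.image_gen[OF assms])
  also have "\<dots> = (\<Sum>y\<in>f ` E. of_nat (card {w\<in>E. f w = 0}) * g y)"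
    using card_lin_on_fiber by (intro sum.cong) simp_all
  finally show ?thesis
    by (simp add: sum_distrib_left)
qed

lemma card_eq_card_kernel_mult_card_image:
  assumes "finite E"
  shows "card E = card {w\<in>E. f w = 0} * card (f ` E)"
  using sum_comp_lin_on[OF assms, of "\<lambda>_. 1 :: nat"] by simp

lemma sum_image_eq_zero:
  fixes g :: "(nat \<Rightarrow> 'a) \<Rightarrow> 'c::{idom,ring_char_0}"
  assumes "finite E" "(\<Sum>w\<in>E. g (f w)) = 0"
  shows "(\<Sum>y\<in>f ` E. g y) = 0"
proof -
  have "card {w\<in>E. f w = 0} \<noteq> 0"
    using assms(1) lin_on_zero vs.subspace_0[OF subspace] by (subst card_0_eq) auto
  then show ?thesis
    using sum_comp_lin_on[OF assms(1), of g] assms(2) by simp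
qed

lemma inj_on_iff_kernel: "inj_on f E \<longleftrightarrow> (\<forall>w\<in>E. f w = 0 \<longrightarrow> w = 0)"
proof (intro iffI ballI impI)
  fix w assume "inj_on f E" "w \<in> E" "f w = 0"
  then show "w = 0"
    using inj_onD[of f E w 0] lin_on_zero vs.subspace_0[OF subspace] by simp
next
  assume ker: "\<forall>w\<in>E. f w = 0 \<longrightarrow> w = 0"
  show "inj_on f E"
  proof (rule inj_onI)
    fix u v assume uv: "u \<in> E" "v \<in> E" "f u = f v"
    then have "f (u - v) = 0"
      by (simp add: lin_on_diff)
    then have "u - v = 0"
      using ker vs.subspace_diff[OF subspace uv(1,2)] by blast
    then show "u = v"
      by simp
  qed
qed

end

lemma lin_on_subset: "lin_on E f \<Longrightarrow> D \<subseteq> E \<Longrightarrow> lin_on D f"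
  unfolding lin_on_def by blast

lemma lin_on_restrict:
  assumes "vs.subspace D" "lin_on D f"
  shows "lin_on D (restrict f D)"
  using assms vs.subspace_add[OF assms(1)] vs.subspace_scale[OF assms(1)] unfolding lin_on_def by simp

lemma lin_on_comp:
  assumes "vs.subspace E" "lin_on E f" "f ` E \<subseteq> F" "lin_on F g"
  shows "lin_on E (g \<circ> f)"
  using assms lin_on_add[OF assms(1,2)] lin_on_scl[OF assms(1,2)]
  unfolding lin_on_def by (simp add: image_subset_iff vs.subspace_add vs.subspace_scale)

definition lin_functional :: "(nat \<Rightarrow> 'a::field) set \<Rightarrow> ((nat \<Rightarrow> 'a) \<Rightarrow> 'a) \<Rightarrow> bool" where
  "lin_functional E \<psi> \<longleftrightarrow>
     (\<forall>u\<in>E. \<forall>v\<in>E. \<psi> (u + v) = \<psi> u + \<psi> v) \<and> (\<forall>c. \<forall>v\<in>E. \<psi> (scl c v) = c * \<psi> v)"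

context
  fixes E :: "(nat \<Rightarrow> 'a::field) set" and \<psi> :: "(nat \<Rightarrow> 'a) \<Rightarrow> 'a"
  assumes subspace: "vs.subspace E" and functional: "lin_functional E \<psi>"
begin

lemma lin_functional_add: "u \<in> E \<Longrightarrow> v \<in> E \<Longrightarrow> \<psi> (u + v) = \<psi> u + \<psi> v"
  using functional by (simp add: lin_functional_def)

lemma lin_functional_scl: "v \<in> E \<Longrightarrow> \<psi> (scl c v) = c * \<psi> v"
  using functional by (simp add: lin_functional_def)

lemma lin_functional_diff: "u \<in> E \<Longrightarrow> v \<in> E \<Longrightarrow> \<psi> (u - v) = \<psi> u - \<psi> v"
  using lin_functional_add[of u "- v"] lin_functional_scl[where c = "-1"] vs.subspace_neg[OF subspace]
  by simp

lemma subspace_lin_functional_kernel: "vs.subspace {w\<in>E. \<psi> w = 0}"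
  unfolding vs.subspace_def
  using lin_functional_add lin_functional_scl lin_functional_diff[of 0 0] vs.subspace_0[OF subspace]
    vs.subspace_add[OF subspace] vs.subspace_scale[OF subspace] by auto

end

lemma lin_functional_subset: "lin_functional E \<psi> \<Longrightarrow> D \<subseteq> E \<Longrightarrow> lin_functional D \<psi>"
  unfolding lin_functional_def by blast

lemma lin_functional_comp:
  assumes "vs.subspace E" "lin_on E f" "f ` E \<subseteq> F" "lin_functional F \<psi>"
  shows "lin_functional E (\<psi> \<circ> f)"
  using assms lin_on_add[OF assms(1,2)] lin_on_scl[OF assms(1,2)]
    vs.subspace_add[OF assms(1)] vs.subspace_scale[OF assms(1)]
  unfolding lin_functional_def by (simp add: image_subset_iff)

lemma sum_translate_subspace:
  assumes "vs.subspace K" "t \<in> K"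
  shows "(\<Sum>p\<in>K. g (t + p)) = (\<Sum>v\<in>K. g v)"
proof (rule sum.reindex_bij_witness[where i = "\<lambda>v. v - t" and j = "\<lambda>p. t + p"])
  fix v assume "v \<in> K"
  then show "v - t \<in> K" "t + (v - t) = v"
    using vs.subspace_diff[OF assms(1) _ assms(2)] by simp_all
next
  fix p assume "p \<in> K"
  then show "t + p \<in> K" "t + p - t = p"
    using vs.subspace_add[OF assms(1) assms(2)] by simp_all
qed simp

section \<open>Counting vectors over a finite field\<close>

lemma span_insert_subspace:
  assumes "vs.subspace W"
  shows "vs.span (insert a W) = {x. \<exists>c. x - scl c a \<in> W}"
proof -
  have "vs.span W = W" using assms by simp
  then show ?thesis unfolding vs.span_insert[of a W] by (rule ssubst) (rule refl)
qed

lemma card_span_insert: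
  fixes W :: "(nat \<Rightarrow> 'a::{field,finite}) set"
  assumes subspace: "vs.subspace W" and "a \<notin> W"
  shows "card (vs.span (insert a W)) = CARD('a) * card W"
proof -
  have inj: "inj_on (\<lambda>(c, w). w + scl c a) (UNIV \<times> W)"
  proof (rule inj_onI, clarsimp)
    fix c c' w w' assume w: "w \<in> W" "w' \<in> W" and eq: "w + scl c a = w' + scl c' a"
    show "c = c' \<and> w = w'"
    proof (cases "c = c'")
      case False
      have "scl (c - c') a = w' - w"
        using eq by (simp add: fun_eq_iff scl_def algebra_simps)
      then have "scl (1 / (c - c')) (scl (c - c') a) = scl (1 / (c - c')) (w' - w)"
        by simp
      then have "a = scl (1 / (c - c')) (w' - w)"
        using False by (simp add: fun_eq_iff scl_def)
      moreover have "scl (1 / (c - c')) (w' - w) \<in> W"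
        using w by (simp add: vs.subspace_scale[OF subspace] vs.subspace_diff[OF subspace])
      ultimately show ?thesis
        using \<open>a \<notin> W\<close> by simp
    qed (use eq in simp)
  qed
  have image: "(\<lambda>(c, w). w + scl c a) ` (UNIV \<times> W) = vs.span (insert a W)"
  proof (intro equalityI subsetI)
    fix x assume "x \<in> vs.span (insert a W)"
    then obtain c where "x - scl c a \<in> W"
      unfolding span_insert_subspace[OF subspace] by blast
    then show "x \<in> (\<lambda>(c, w). w + scl c a) ` (UNIV \<times> W)"
      by (intro image_eqI[of _ _ "(c, x - scl c a)"]) auto
  next
    fix x assume "x \<in> (\<lambda>(c, w). w + scl c a) ` (UNIV \<times> W)"
    then obtain c w where "w \<in> W" "x = w + scl c a" by auto
    then show "x \<in> vs.span (insert a W)"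
      unfolding span_insert_subspace[OF subspace] by (intro CollectI exI[of _ c]) simp
  qed
  show ?thesis
    using card_image[OF inj] by (simp add: image card_cartesian_product)
qed

lemma card_span_independent:
  fixes B :: "(nat \<Rightarrow> 'a::{field,finite}) set"
  assumes "finite B" "vs.independent B"
  shows "card (vs.span B) = CARD('a) ^ card B"
  using assms
proof (induction B rule: finite_induct)
  case (insert a B)
  then have "vs.independent B" "a \<notin> vs.span B"
    using vs.independent_insert[of a B] by simp_all
  then show ?case
    using insert card_span_insert[of "vs.span B" a] by (simp add: vs.span_insert vs.span_span)
qed simp

lemma card_subspace:
  fixes E :: "(nat \<Rightarrow> 'a::{field,finite}) set"
  assumes "finite E" "vs.subspace E"
  shows "card E = CARD('a) ^ vs.dim E"
proof -
  obtain B where B: "B \<subseteq> E" "vs.independent B" "E \<subseteq> vs.span B" "card B = vs.dim E"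
    using vs.basis_exists by blast
  then have "vs.span B = E"
    using vs.span_minimal[OF B(1) assms(2)] by auto
  moreover have "finite B"
    using B(1) assms(1) finite_subset by blast
  ultimately show ?thesis
    using card_span_independent B by metis
qed

lemma one_less_card_field: "1 < CARD('a::{field,finite})"
proof -
  have "card {0, 1 :: 'a} \<le> CARD('a)"
    by (rule card_mono) auto
  then show ?thesis by simp
qed

lemma dim_subspace_eqI:
  fixes E :: "(nat \<Rightarrow> 'a::{field,finite}) set"
  assumes "finite E" "vs.subspace E" "card E = CARD('a) ^ n"
  shows "vs.dim E = n"
  using card_subspace[OF assms(1,2)] assms(3) one_less_card_field[where 'a = 'a]
  by (simp add: power_inject_exp)

lemma dim_eq_if_card_eq:
  fixes A B :: "(nat \<Rightarrow> 'a::{field,finite}) set"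
  assumes "finite A" "vs.subspace A" "finite B" "vs.subspace B" "card A = card B"
  shows "vs.dim A = vs.dim B"
  using dim_subspace_eqI[OF assms(1,2)] card_subspace[OF assms(3,4)] assms(5) by simp

lemma dim_le_subspace:
  fixes A B :: "(nat \<Rightarrow> 'a::{field,finite}) set"
  assumes "finite B" "vs.subspace A" "vs.subspace B" "A \<subseteq> B"
  shows "vs.dim A \<le> vs.dim B"
proof -
  have "finite A"
    using assms(1,4) finite_subset by blast
  then have "CARD('a) ^ vs.dim A \<le> CARD('a) ^ vs.dim B"
    using card_mono[OF assms(1,4)] card_subspace[OF _ assms(2)] card_subspace[OF assms(1,3)] by simp
  then show ?thesis
    by (rule power_le_imp_le_exp[OF one_less_card_field])
qed

section \<open>Operators whose powers stabilise\<close>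

definition endo_on :: "(nat \<Rightarrow> 'a::field) set \<Rightarrow> ((nat \<Rightarrow> 'a) \<Rightarrow> (nat \<Rightarrow> 'a)) \<Rightarrow> bool" where
  "endo_on E S \<longleftrightarrow> lin_on E S \<and> S ` E \<subseteq> E"

definition stable_powers :: "'b set \<Rightarrow> ('b \<Rightarrow> 'b) \<Rightarrow> bool" where
  "stable_powers E S \<longleftrightarrow> (\<exists>N. \<forall>w\<in>E. (S ^^ Suc N) w = (S ^^ N) w)"

definition fixpoints :: "'b set \<Rightarrow> ('b \<Rightarrow> 'b) \<Rightarrow> 'b set" where
  "fixpoints E S = {w\<in>E. S w = w}"

lemma funpow_closed:
  fixes S :: "'b \<Rightarrow> 'b"
  shows "S ` E \<subseteq> E \<Longrightarrow> w \<in> E \<Longrightarrow> (S ^^ n) w \<in> E"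
  by (induction n) auto

lemma funpow_cong_on:
  fixes S :: "'b \<Rightarrow> 'b"
  assumes "S ` E \<subseteq> E" "\<And>w. w \<in> E \<Longrightarrow> S w = S' w" "w \<in> E"
  shows "(S ^^ n) w = (S' ^^ n) w"
proof (induction n)
  case (Suc n)
  have "(S ^^ Suc n) w = S' ((S ^^ n) w)"
    using assms(2)[OF funpow_closed[OF assms(1,3)]] by simp
  then show ?case
    using Suc.IH by simp
qed simp

lemma stable_powers_cong:
  fixes S :: "'b \<Rightarrow> 'b"
  assumes "S ` E \<subseteq> E" "\<And>w. w \<in> E \<Longrightarrow> S w = S' w"
  shows "stable_powers E S \<longleftrightarrow> stable_powers E S'"
  unfolding stable_powers_def using funpow_cong_on[OF assms] by metis

lemma fixpoints_cong: "(\<And>w. w \<in> E \<Longrightarrow> S w = S' w) \<Longrightarrow> fixpoints E S = fixpoints E S'"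
  by (auto simp: fixpoints_def)

lemma funpow_stable_from:
  fixes S :: "'b \<Rightarrow> 'b"
  assumes "\<forall>w\<in>E. (S ^^ Suc N) w = (S ^^ N) w" "N \<le> M" "w \<in> E"
  shows "(S ^^ Suc M) w = (S ^^ M) w"
proof -
  obtain d where M: "M = d + N" using \<open>N \<le> M\<close> by (metis le_add_diff_inverse2)
  have "(S ^^ Suc M) w = (S ^^ (d + Suc N)) w"
    unfolding M by simp
  also have "\<dots> = (S ^^ d) ((S ^^ Suc N) w)"
    by (simp only: funpow_add comp_apply)
  also have "\<dots> = (S ^^ M) w"
    using assms(1,3) unfolding M by (simp add: funpow_add)
  finally show ?thesis .
qed

lemma image_funpow_eq_fixpoints:
  fixes S :: "'b \<Rightarrow> 'b"
  assumes stable: "\<forall>w\<in>E. (S ^^ Suc N) w = (S ^^ N) w" and "S ` E \<subseteq> E" "N \<le> M"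
  shows "(S ^^ M) ` E = fixpoints E S"
proof (intro equalityI subsetI)
  fix x assume "x \<in> (S ^^ M) ` E"
  then obtain w where "w \<in> E" "x = (S ^^ M) w" by blast
  then show "x \<in> fixpoints E S"
    using funpow_stable_from[OF stable \<open>N \<le> M\<close>] funpow_closed[OF \<open>S ` E \<subseteq> E\<close>]
    by (simp add: fixpoints_def)
next
  fix x assume x: "x \<in> fixpoints E S"
  then have "x \<in> E" "S x = x"
    by (auto simp: fixpoints_def)
  moreover from \<open>S x = x\<close> have "(S ^^ M) x = x"
    by (induction M) auto
  ultimately show "x \<in> (S ^^ M) ` E"
    by (metis image_eqI)
qed

lemma stable_powers_inj_on_fixes:
  fixes S :: "'b \<Rightarrow> 'b"
  assumes "stable_powers E S" "inj_on S E" "S ` E \<subseteq> E" "w \<in> E"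
  shows "S w = w"
proof -
  have key: "\<And>w. w \<in> E \<Longrightarrow> (S ^^ n) (S w) = (S ^^ n) w \<Longrightarrow> S w = w" for n
  proof (induction n)
    case (Suc n)
    have "(S ^^ n) (S w) \<in> E" "(S ^^ n) w \<in> E"
      using funpow_closed[OF assms(3)] Suc.prems(1) assms(3) by blast+
    then have "(S ^^ n) (S w) = (S ^^ n) w"
      using Suc.prems(2) inj_onD[OF assms(2)] by simp
    then show ?case
      using Suc.IH Suc.prems(1) by blast
  qed simp
  obtain N where "\<forall>w\<in>E. (S ^^ Suc N) w = (S ^^ N) w"
    using assms(1) unfolding stable_powers_def by blast
  then have "(S ^^ N) (S w) = (S ^^ N) w"
    using assms(4) by (simp add: funpow_Suc_right del: funpow.simps)
  then show ?thesis
    by (rule key[OF assms(4)])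
qed

lemma lin_on_id_minus:
  assumes "vs.subspace E" "lin_on E S"
  shows "lin_on E (\<lambda>w. w - S w)"
  unfolding lin_on_def
proof (intro conjI ballI allI)
  fix u v assume "u \<in> E" "v \<in> E"
  then show "u + v - S (u + v) = u - S u + (v - S v)"
    by (simp add: lin_on_add[OF assms])
next
  fix c v assume "v \<in> E"
  then have "S (scl c v) = scl c (S v)"
    by (rule lin_on_scl[OF assms])
  then show "scl c v - S (scl c v) = scl c (v - S v)"
    by (simp add: scl_def fun_eq_iff right_diff_distrib)
qed

lemma fixpoints_eq_kernel:
  fixes S :: "'b::group_add \<Rightarrow> 'b"
  shows "fixpoints E S = {w\<in>E. w - S w = 0}"
  unfolding fixpoints_def by (metis right_minus_eq)

lemma subspace_fixpoints:
  assumes "vs.subspace E" "endo_on E S"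
  shows "vs.subspace (fixpoints E S)"
  unfolding fixpoints_eq_kernel
  using assms lin_on_id_minus subspace_lin_on_kernel by (metis endo_on_def)

lemma pdom_endo: "(S :: (nat \<Rightarrow> 'a) \<Rightarrow> (nat \<Rightarrow> 'a)) ` A \<subseteq> A \<Longrightarrow> pdom A A S k = A"
  by (induction k) (auto simp: funpow_closed)

lemma semi_idem_iff_stable_powers:
  assumes "S ` A \<subseteq> A"
  shows "semi_idem A A S \<longleftrightarrow> stable_powers A S"
proof -
  have "(\<forall>w \<in> (S ^^ N) ` A. w \<in> A \<and> S w = w) \<longleftrightarrow> (\<forall>w\<in>A. (S ^^ Suc N) w = (S ^^ N) w)" for N
    using funpow_closed[OF assms] by auto
  then show ?thesis
    unfolding semi_idem_def stable_powers_def pdom_endo[OF assms] by simp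
qed

lemma srk_eq_dim_fixpoints:
  assumes "S ` E \<subseteq> E" "stable_powers E S"
  shows "srk E S = vs.dim (fixpoints E S)"
proof -
  obtain N where "\<forall>w\<in>E. (S ^^ Suc N) w = (S ^^ N) w"
    using assms(2) unfolding stable_powers_def by blast
  then have rk: "rk E (S ^^ i) = vs.dim (fixpoints E S)" if "N \<le> i" for i
    unfolding rk_def using image_funpow_eq_fixpoints[OF _ assms(1) that] by simp
  show ?thesis
    unfolding srk_def
  proof (rule the_equality)
    fix r assume "\<exists>N'. \<forall>i\<ge>N'. rk E (S ^^ i) = r"
    then obtain N' where "\<forall>i\<ge>N'. rk E (S ^^ i) = r" by blast
    then show "r = vs.dim (fixpoints E S)"
      using rk[of "max N N'"] by simp
  qed (use rk in blast)
qed

lemma mu_Suc: "mu q (Suc s) = - (q ^ s) * mu q s"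
proof -
  have "Suc s choose 2 = s + (s choose 2)"
    by (simp add: numeral_2_eq_2)
  then show ?thesis
    unfolding mu_def by (simp add: power_add)
qed

text \<open>For semi-idempotent \<open>S\<close> this is \<open>\<mu>(srk S)\<close>, see \<open>srk_eq_dim_fixpoints\<close>.\<close>

definition mobius_weight :: "(nat \<Rightarrow> 'a::{field,finite}) set \<Rightarrow> ((nat \<Rightarrow> 'a) \<Rightarrow> (nat \<Rightarrow> 'a)) \<Rightarrow> int" where
  "mobius_weight E S = (if stable_powers E S then mu CARD('a) (vs.dim (fixpoints E S)) else 0)"

lemma mobius_weight_cong:
  assumes "S ` E \<subseteq> E" "\<And>w. w \<in> E \<Longrightarrow> S w = S' w"
  shows "mobius_weight E S = mobius_weight E S'"
  unfolding mobius_weight_def using stable_powers_cong[OF assms] fixpoints_cong[of E S S'] assms(2)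
  by simp

section \<open>Extending an operator from a hyperplane\<close>

definition proj_ker :: "((nat \<Rightarrow> 'a::field) \<Rightarrow> 'a) \<Rightarrow> (nat \<Rightarrow> 'a) \<Rightarrow> (nat \<Rightarrow> 'a) \<Rightarrow> (nat \<Rightarrow> 'a)" where
  "proj_ker \<psi> e w = w - scl (\<psi> w) e"

definition ext_op ::
  "((nat \<Rightarrow> 'a::field) \<Rightarrow> 'a) \<Rightarrow> (nat \<Rightarrow> 'a) \<Rightarrow> ((nat \<Rightarrow> 'a) \<Rightarrow> (nat \<Rightarrow> 'a)) \<Rightarrow> (nat \<Rightarrow> 'a) \<Rightarrow> (nat \<Rightarrow> 'a) \<Rightarrow> (nat \<Rightarrow> 'a)"
where
  "ext_op \<psi> e P v w = P (proj_ker \<psi> e w) + scl (\<psi> w) v"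

lemma proj_ker_plus_scl [simp]: "proj_ker \<psi> e w + scl (\<psi> w) e = w"
  by (simp add: proj_ker_def)

lemma proj_ker_kernel [simp]: "\<psi> k = 0 \<Longrightarrow> proj_ker \<psi> e k = k"
  by (simp add: proj_ker_def)

lemma ext_op_kernel: "\<psi> k = 0 \<Longrightarrow> ext_op \<psi> e P v k = P k"
  by (simp add: ext_op_def)

locale hyperplane =
  fixes E :: "(nat \<Rightarrow> 'a::field) set" and \<psi> :: "(nat \<Rightarrow> 'a) \<Rightarrow> 'a" and e :: "nat \<Rightarrow> 'a"
  assumes subspace: "vs.subspace E" and functional: "lin_functional E \<psi>"
    and e_in: "e \<in> E" and \<psi>_e: "\<psi> e = 1"
begin

abbreviation K :: "(nat \<Rightarrow> 'a) set" where
  "K \<equiv> {w\<in>E. \<psi> w = 0}"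

lemma subspace_K: "vs.subspace K"
  by (rule subspace_lin_functional_kernel[OF subspace functional])

lemma K_psubset: "K \<subset> E"
proof -
  have "e \<notin> K"
    using \<psi>_e by simp
  then show ?thesis
    using e_in by blast
qed

lemma add_scl_e_in: "w \<in> E \<Longrightarrow> w + scl c e \<in> E"
  using vs.subspace_add[OF subspace] vs.subspace_scale[OF subspace e_in] by blast

lemma \<psi>_add_scl_e:
  assumes "w \<in> E"
  shows "\<psi> (w + scl c e) = \<psi> w + c"
proof -
  have "\<psi> (w + scl c e) = \<psi> w + \<psi> (scl c e)"
    using assms vs.subspace_scale[OF subspace e_in] by (rule lin_functional_add[OF subspace functional])
  also have "\<psi> (scl c e) = c"
    using lin_functional_scl[OF subspace functional e_in] \<psi>_e by simp
  finally show ?thesis .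
qed

lemma proj_ker_eq: "proj_ker \<psi> e w = w + scl (- \<psi> w) e"
  by (simp add: proj_ker_def scl_def fun_eq_iff)

lemma proj_ker_in: "w \<in> E \<Longrightarrow> proj_ker \<psi> e w \<in> K"
  using add_scl_e_in[of w "- \<psi> w"] \<psi>_add_scl_e[of w "- \<psi> w"] unfolding proj_ker_eq by simp

lemma proj_ker_add_scl_e: "k \<in> K \<Longrightarrow> proj_ker \<psi> e (k + scl c e) = k"
  unfolding proj_ker_def using \<psi>_add_scl_e by simp

lemma lin_on_proj_ker: "lin_on E (proj_ker \<psi> e)"
  unfolding lin_on_def
proof (intro conjI ballI allI)
  fix u v assume "u \<in> E" "v \<in> E"
  then have "\<psi> (u + v) = \<psi> u + \<psi> v"
    by (rule lin_functional_add[OF subspace functional])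
  then show "proj_ker \<psi> e (u + v) = proj_ker \<psi> e u + proj_ker \<psi> e v"
    by (simp add: proj_ker_def scl_def fun_eq_iff algebra_simps)
next
  fix c v assume "v \<in> E"
  then have "\<psi> (scl c v) = c * \<psi> v"
    by (rule lin_functional_scl[OF subspace functional])
  then show "proj_ker \<psi> e (scl c v) = scl c (proj_ker \<psi> e v)"
    by (simp add: proj_ker_def scl_def fun_eq_iff algebra_simps)
qed

lemma span_insert_e_K: "vs.span (insert e K) = E"
  unfolding span_insert_subspace[OF subspace_K]
proof (intro equalityI subsetI)
  fix x assume "x \<in> {x. \<exists>c. x - scl c e \<in> K}"
  then obtain c where "x - scl c e \<in> E" by blast
  then show "x \<in> E"
    using add_scl_e_in[of "x - scl c e" c] by simp
next
  fix x assume "x \<in> E"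
  then show "x \<in> {x. \<exists>c. x - scl c e \<in> K}"
    using proj_ker_in unfolding proj_ker_def by blast
qed

context
  fixes P :: "(nat \<Rightarrow> 'a) \<Rightarrow> (nat \<Rightarrow> 'a)"
  assumes P: "lin_on K P"
begin

lemma ext_op_e: "ext_op \<psi> e P v e = v"
  using lin_on_zero[OF subspace_K P] \<psi>_e by (simp add: ext_op_def proj_ker_def)

lemma lin_on_ext_op: "lin_on E (ext_op \<psi> e P v)"
  unfolding lin_on_def
proof (intro conjI ballI allI)
  fix u w assume "u \<in> E" "w \<in> E"
  then have "P (proj_ker \<psi> e (u + w)) = P (proj_ker \<psi> e u) + P (proj_ker \<psi> e w)"
    and "\<psi> (u + w) = \<psi> u + \<psi> w"
    using lin_on_add[OF subspace lin_on_proj_ker] lin_on_add[OF subspace_K P] proj_ker_in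
      lin_functional_add[OF subspace functional] by simp_all
  then show "ext_op \<psi> e P v (u + w) = ext_op \<psi> e P v u + ext_op \<psi> e P v w"
    by (simp add: ext_op_def scl_def fun_eq_iff algebra_simps)
next
  fix c w assume "w \<in> E"
  then have "P (proj_ker \<psi> e (scl c w)) = scl c (P (proj_ker \<psi> e w))"
    and "\<psi> (scl c w) = c * \<psi> w"
    using lin_on_scl[OF subspace lin_on_proj_ker] lin_on_scl[OF subspace_K P] proj_ker_in
      lin_functional_scl[OF subspace functional] by simp_all
  then show "ext_op \<psi> e P v (scl c w) = scl c (ext_op \<psi> e P v w)"
    by (simp add: ext_op_def scl_def fun_eq_iff algebra_simps)
qed

lemma endo_ext_op:
  assumes "P ` K \<subseteq> E" "v \<in> E"
  shows "endo_on E (ext_op \<psi> e P v)"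
proof -
  have "ext_op \<psi> e P v w \<in> E" if "w \<in> E" for w
    using assms proj_ker_in[OF that] vs.subspace_add[OF subspace] vs.subspace_scale[OF subspace]
    unfolding ext_op_def by blast
  then show ?thesis
    using lin_on_ext_op unfolding endo_on_def by blast
qed

lemma image_ext_op: "ext_op \<psi> e P v ` E = vs.span (insert v (P ` K))"
  unfolding span_insert_subspace[OF subspace_lin_on_image[OF subspace_K P]]
proof (intro equalityI subsetI)
  fix x assume "x \<in> ext_op \<psi> e P v ` E"
  then obtain w where "w \<in> E" "x = ext_op \<psi> e P v w" by blast
  then show "x \<in> {x. \<exists>c. x - scl c v \<in> P ` K}"
    using proj_ker_in by (intro CollectI exI[of _ "\<psi> w"]) (simp add: ext_op_def)
next
  fix x assume "x \<in> {x. \<exists>c. x - scl c v \<in> P ` K}"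
  then obtain c k where "k \<in> K" "x - scl c v = P k"
    by blast
  then have k: "k \<in> K" "x = P k + scl c v"
    by (simp_all add: diff_eq_eq)
  then have "ext_op \<psi> e P v (k + scl c e) = x"
    using \<psi>_add_scl_e proj_ker_add_scl_e by (simp add: ext_op_def)
  then show "x \<in> ext_op \<psi> e P v ` E"
    using add_scl_e_in k(1) by blast
qed

end

lemma ext_op_restrict:
  assumes "lin_on E S" "w \<in> E"
  shows "ext_op \<psi> e S (S e) w = S w"
proof -
  have "S (w - scl (\<psi> w) e) = S w - scl (\<psi> w) (S e)"
    using lin_on_diff[OF subspace assms(1) assms(2) vs.subspace_scale[OF subspace e_in]]
      lin_on_scl[OF subspace assms(1) e_in] by simp
  then show ?thesis
    by (simp add: ext_op_def proj_ker_def)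
qed

lemma ext_op_add_scl_e: "k \<in> K \<Longrightarrow> ext_op \<psi> e P v (k + scl c e) = P k + scl c v"
  using \<psi>_add_scl_e proj_ker_add_scl_e by (simp add: ext_op_def)

lemma lin_on_eqI:
  assumes "lin_on E f" "lin_on E g" "\<And>k. k \<in> K \<Longrightarrow> f k = g k" "f e = g e" "w \<in> E"
  shows "f w = g w"
  using ext_op_restrict[OF assms(1,5)] ext_op_restrict[OF assms(2,5)] assms(3,4) proj_ker_in[OF assms(5)]
  by (simp add: ext_op_def)

lemma sum_extensional_endos:
  "(\<Sum>S\<in>{S. endo_on E S \<and> S \<in> extensional E \<and> Q (restrict S K)}. g S) =
     (\<Sum>P\<in>{P. lin_on K P \<and> P ` K \<subseteq> E \<and> P \<in> extensional K \<and> Q P}. \<Sum>v\<in>E. g (restrict (ext_op \<psi> e P v) E))"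
proof -
  let ?ext = "\<lambda>(P, v). restrict (ext_op \<psi> e P v) E"
  let ?Ps = "{P. lin_on K P \<and> P ` K \<subseteq> E \<and> P \<in> extensional K \<and> Q P}"
  have restrict_ext_op: "restrict (restrict (ext_op \<psi> e P v) E) K = P" if "P \<in> extensional K" for P v
    using that by (auto simp: fun_eq_iff ext_op_kernel extensional_def)
  have "(\<Sum>S\<in>{S. endo_on E S \<and> S \<in> extensional E \<and> Q (restrict S K)}. g S) = (\<Sum>x\<in>?Ps \<times> E. g (?ext x))"
  proof (rule sum.reindex_bij_witness[where i = "\<lambda>S. (restrict S K, S e)" and j = ?ext, symmetric])
    fix x assume "x \<in> ?Ps \<times> E"
    then obtain P v where x: "x = (P, v)" and P: "lin_on K P" "P ` K \<subseteq> E" "P \<in> extensional K" "Q P"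
      and v: "v \<in> E"
      by blast
    show "(restrict (?ext x) K, ?ext x e) = x"
      using restrict_ext_op[OF P(3)] ext_op_e[OF P(1)] e_in x by simp
    show "?ext x \<in> {S. endo_on E S \<and> S \<in> extensional E \<and> Q (restrict S K)}"
      using endo_ext_op[OF P(1,2) v] lin_on_restrict[OF subspace] restrict_ext_op[OF P(3)] P(4) x
      by (auto simp: endo_on_def)
  next
    fix S assume "S \<in> {S. endo_on E S \<and> S \<in> extensional E \<and> Q (restrict S K)}"
    then have S: "lin_on E S" "S ` E \<subseteq> E" "S \<in> extensional E" "Q (restrict S K)"
      by (simp_all add: endo_on_def)
    have "ext_op \<psi> e (restrict S K) (S e) w = S w" if "w \<in> E" for w
      using ext_op_restrict[OF S(1) that] proj_ker_in[OF that] by (simp add: ext_op_def)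
    then show "?ext (restrict S K, S e) = S"
      using S(3) by (auto simp: fun_eq_iff extensional_def)
    show "(restrict S K, S e) \<in> ?Ps \<times> E"
      using S e_in lin_on_restrict[OF subspace_K lin_on_subset[OF S(1)]] by auto
  qed simp
  then show ?thesis
    by (simp add: sum.cartesian_product split_def)
qed

lemma functional_separating:
  assumes "z \<in> K" "z \<noteq> 0"
  obtains \<phi> where "lin_functional E \<phi>" "\<phi> z = 1" "\<phi> e = 0"
proof -
  obtain i where i: "z i \<noteq> 0"
    using assms(2) by (auto simp: fun_eq_iff)
  define \<phi> where "\<phi> w = (w i - \<psi> w * e i) / z i" for w
  have "lin_functional E \<phi>"
    using lin_functional_add[OF subspace functional] lin_functional_scl[OF subspace functional]
    unfolding lin_functional_def \<phi>_def using i by (simp add: scl_def field_simps)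
  moreover have "\<phi> z = 1" "\<phi> e = 0"
    using assms(1) i \<psi>_e by (simp_all add: \<phi>_def)
  ultimately show ?thesis
    by (rule that)
qed

text \<open>An operator killing \<open>e\<close> factors through \<open>E / \<langle>e\<rangle> \<cong> K\<close>; the induced operator
  \<open>proj_ker \<psi> e \<circ> S\<close> on \<open>K\<close> has the same semi-idempotence and an isomorphic fixed space.\<close>

context
  fixes S :: "(nat \<Rightarrow> 'a) \<Rightarrow> (nat \<Rightarrow> 'a)"
  assumes S: "endo_on E S" and S_e: "S e = 0"
begin

lemma S_proj_ker: "w \<in> E \<Longrightarrow> S (proj_ker \<psi> e w) = S w"
  using S lin_on_diff[OF subspace, of S w] lin_on_scl[OF subspace, of S e] e_in S_e
    vs.subspace_scale[OF subspace e_in]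
  by (simp add: endo_on_def proj_ker_def)

lemma endo_compress: "endo_on K (proj_ker \<psi> e \<circ> S)"
proof -
  have "lin_on K S"
    using S lin_on_subset[of E S K] by (auto simp: endo_on_def)
  moreover have "S ` K \<subseteq> E"
    using S by (auto simp: endo_on_def)
  ultimately have "lin_on K (proj_ker \<psi> e \<circ> S)"
    using lin_on_comp[OF subspace_K] lin_on_proj_ker by blast
  moreover have "(proj_ker \<psi> e \<circ> S) ` K \<subseteq> K"
    using \<open>S ` K \<subseteq> E\<close> proj_ker_in by auto
  ultimately show ?thesis
    by (simp add: endo_on_def)
qed

lemma funpow_compress:
  assumes "w \<in> E"
  shows "(S ^^ Suc n) w = S (((proj_ker \<psi> e \<circ> S) ^^ n) (proj_ker \<psi> e w))"
proof (induction n)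
  case 0
  show ?case using S_proj_ker[OF assms] by simp
next
  case (Suc n)
  let ?u = "((proj_ker \<psi> e \<circ> S) ^^ n) (proj_ker \<psi> e w)"
  have "(proj_ker \<psi> e \<circ> S) ` K \<subseteq> K"
    using endo_compress by (simp add: endo_on_def)
  then have "?u \<in> K"
    by (rule funpow_closed[OF _ proj_ker_in[OF assms]])
  then have "S ?u \<in> E"
    using S by (auto simp: endo_on_def)
  have "(S ^^ Suc (Suc n)) w = S ((S ^^ Suc n) w)"
    by simp
  also have "\<dots> = S (S ?u)"
    using Suc.IH by (rule arg_cong)
  also have "\<dots> = S (proj_ker \<psi> e (S ?u))"
    using S_proj_ker[OF \<open>S ?u \<in> E\<close>] by simp
  also have "\<dots> = S (((proj_ker \<psi> e \<circ> S) ^^ Suc n) (proj_ker \<psi> e w))"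
    by (simp only: funpow.simps comp_apply)
  finally show ?case .
qed

lemma funpow_compress_K:
  assumes "k \<in> K"
  shows "((proj_ker \<psi> e \<circ> S) ^^ n) k = proj_ker \<psi> e ((S ^^ n) k)"
proof (cases n)
  case 0
  then show ?thesis using assms by simp
next
  case (Suc m)
  have "((proj_ker \<psi> e \<circ> S) ^^ Suc m) k = proj_ker \<psi> e (S (((proj_ker \<psi> e \<circ> S) ^^ m) k))"
    by (simp only: funpow.simps comp_apply)
  also have "\<dots> = proj_ker \<psi> e ((S ^^ Suc m) k)"
    using funpow_compress[of k m] assms by simp
  finally show ?thesis
    using Suc by simp
qed

lemma stable_powers_compress: "stable_powers E S \<longleftrightarrow> stable_powers K (proj_ker \<psi> e \<circ> S)"
proof
  assume "stable_powers E S"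
  then obtain N where N: "\<forall>w\<in>E. (S ^^ Suc N) w = (S ^^ N) w"
    unfolding stable_powers_def by blast
  have "((proj_ker \<psi> e \<circ> S) ^^ Suc N) k = ((proj_ker \<psi> e \<circ> S) ^^ N) k" if "k \<in> K" for k
    using N that unfolding funpow_compress_K[OF that] by simp
  then show "stable_powers K (proj_ker \<psi> e \<circ> S)"
    unfolding stable_powers_def by blast
next
  assume "stable_powers K (proj_ker \<psi> e \<circ> S)"
  then obtain N where N: "\<forall>k\<in>K. ((proj_ker \<psi> e \<circ> S) ^^ Suc N) k = ((proj_ker \<psi> e \<circ> S) ^^ N) k"
    unfolding stable_powers_def by blast
  have "(S ^^ Suc (Suc N)) w = (S ^^ Suc N) w" if "w \<in> E" for w
    using N proj_ker_in[OF that] unfolding funpow_compress[OF that] by simp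
  then show "stable_powers E S"
    unfolding stable_powers_def by blast
qed

lemma bij_fixpoints_compress:
  "bij_betw (proj_ker \<psi> e) (fixpoints E S) (fixpoints K (proj_ker \<psi> e \<circ> S))"
proof (rule bij_betwI[where g = S])
  show "proj_ker \<psi> e \<in> fixpoints E S \<rightarrow> fixpoints K (proj_ker \<psi> e \<circ> S)"
    using proj_ker_in S_proj_ker by (auto simp: fixpoints_def)
  show "S \<in> fixpoints K (proj_ker \<psi> e \<circ> S) \<rightarrow> fixpoints E S"
  proof
    fix k assume k: "k \<in> fixpoints K (proj_ker \<psi> e \<circ> S)"
    then have "S k \<in> E"
      using S by (auto simp: endo_on_def fixpoints_def)
    then have "S (S k) = S k"
      using k S_proj_ker[of "S k"] by (simp add: fixpoints_def)
    then show "S k \<in> fixpoints E S"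
      using \<open>S k \<in> E\<close> by (simp add: fixpoints_def)
  qed
qed (use S_proj_ker in \<open>auto simp: fixpoints_def\<close>)

end

end

locale finite_hyperplane = hyperplane E \<psi> e
  for E :: "(nat \<Rightarrow> 'a::{field,finite}) set" and \<psi> e +
  assumes finite: "finite E"
begin

lemma card_E: "card E = CARD('a) * card K"
  using card_span_insert[OF subspace_K, of e] span_insert_e_K \<psi>_e by simp

lemma dim_E: "vs.dim E = Suc (vs.dim K)"
  using card_E card_subspace[OF _ subspace_K] finite
  by (intro dim_subspace_eqI[OF finite subspace]) simp

lemma sum_E: "(\<Sum>v\<in>E. g v) = (\<Sum>k\<in>K. \<Sum>c\<in>UNIV. g (k + scl c e))"
proof -
  have "bij_betw (\<lambda>(k, c). k + scl c e) (K \<times> UNIV) E"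
  proof (rule bij_betwI[where g = "\<lambda>v. (proj_ker \<psi> e v, \<psi> v)"])
    show "(\<lambda>v. (proj_ker \<psi> e v, \<psi> v)) \<in> E \<rightarrow> K \<times> UNIV"
      using proj_ker_in by blast
    show "\<And>v. v \<in> E \<Longrightarrow> (\<lambda>(k, c). k + scl c e) (proj_ker \<psi> e v, \<psi> v) = v"
      by (simp add: proj_ker_def)
  qed (auto simp: add_scl_e_in \<psi>_add_scl_e proj_ker_add_scl_e)
  then have "(\<Sum>v\<in>E. g v) = (\<Sum>x\<in>K \<times> UNIV. g ((\<lambda>(k, c). k + scl c e) x))"
    by (simp add: sum.reindex_bij_betw)
  then show ?thesis
    by (simp add: sum.cartesian_product split_def)
qed

lemma mobius_weight_compress:
  assumes "endo_on E S" "S e = 0"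
  shows "mobius_weight E S = mobius_weight K (proj_ker \<psi> e \<circ> S)"
proof -
  have "vs.dim (fixpoints E S) = vs.dim (fixpoints K (proj_ker \<psi> e \<circ> S))"
    using finite subspace_fixpoints[OF subspace assms(1)] subspace_fixpoints[OF subspace_K endo_compress[OF assms]]
      bij_betw_same_card[OF bij_fixpoints_compress[OF assms]]
    by (intro dim_eq_if_card_eq) (auto simp: fixpoints_def)
  then show ?thesis
    unfolding mobius_weight_def using stable_powers_compress[OF assms] by simp
qed

lemma dim_image_ext_op:
  assumes P: "lin_on K P" "P ` K \<subseteq> E" and "v \<in> E"
  shows "vs.dim (ext_op \<psi> e P v ` E) =
    (if v \<in> P ` K then vs.dim (P ` K) else Suc (vs.dim (P ` K)))"
proof -
  have sub: "vs.subspace (P ` K)"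
    by (rule subspace_lin_on_image[OF subspace_K P(1)])
  show ?thesis
  proof (cases "v \<in> P ` K")
    case True
    then have "vs.span (insert v (P ` K)) = vs.span (P ` K)"
      by (simp add: vs.span_redundant vs.span_base)
    then show ?thesis
      using True by (simp add: image_ext_op[OF P(1)])
  next
    case False
    have "finite (ext_op \<psi> e P v ` E)"
      using finite by simp
    moreover have "card (ext_op \<psi> e P v ` E) = CARD('a) ^ Suc (vs.dim (P ` K))"
      using card_span_insert[OF sub False] card_subspace[OF _ sub] finite_subset[OF P(2) finite]
      by (simp add: image_ext_op[OF P(1)])
    moreover have "vs.subspace (ext_op \<psi> e P v ` E)"
      by (simp add: image_ext_op[OF P(1)])
    ultimately show ?thesis
      using False dim_subspace_eqI[of "ext_op \<psi> e P v ` E" "Suc (vs.dim (P ` K))"] by simp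
  qed
qed

end

section \<open>Extensions of an endomorphism of the hyperplane\<close>

text \<open>For \<open>P ` K \<subseteq> K\<close> and \<open>S = ext_op \<psi> e P v\<close> we have \<open>\<psi> (S w) = \<psi> w * \<psi> v\<close>, so \<open>S\<close>
  can only be semi-idempotent if \<open>\<psi> v\<close> is \<open>0\<close> or \<open>1\<close>.\<close>

context hyperplane
begin

context
  fixes P :: "(nat \<Rightarrow> 'a) \<Rightarrow> (nat \<Rightarrow> 'a)"
  assumes P: "endo_on K P"
begin

lemma P_K: "k \<in> K \<Longrightarrow> P k \<in> K"
  using P by (auto simp: endo_on_def)

lemma lin_on_P: "lin_on K P"
  using P by (simp add: endo_on_def)

lemma funpow_P_K: "k \<in> K \<Longrightarrow> (P ^^ n) k \<in> K"
  using funpow_closed[of P K] P by (simp add: endo_on_def)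

lemma funpow_ext_op_e:
  assumes "w \<in> E"
  shows "(ext_op \<psi> e P e ^^ n) w = (P ^^ n) (proj_ker \<psi> e w) + scl (\<psi> w) e"
proof (induction n)
  case (Suc n)
  have "(P ^^ n) (proj_ker \<psi> e w) \<in> K"
    by (rule funpow_P_K[OF proj_ker_in[OF assms]])
  then have "ext_op \<psi> e P e ((P ^^ n) (proj_ker \<psi> e w) + scl (\<psi> w) e)
      = P ((P ^^ n) (proj_ker \<psi> e w)) + scl (\<psi> w) e"
    by (rule ext_op_add_scl_e)
  then show ?case
    using Suc.IH by (simp only: funpow.simps comp_apply)
qed simp

lemma stable_powers_ext_op_e:
  assumes "stable_powers K P"
  shows "stable_powers E (ext_op \<psi> e P e)"
proof -
  obtain N where "\<forall>k\<in>K. (P ^^ Suc N) k = (P ^^ N) k"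
    using assms unfolding stable_powers_def by blast
  then have "(ext_op \<psi> e P e ^^ Suc N) w = (ext_op \<psi> e P e ^^ N) w" if "w \<in> E" for w
    using proj_ker_in[OF that] unfolding funpow_ext_op_e[OF that] by simp
  then show ?thesis
    unfolding stable_powers_def by blast
qed

lemma fixpoints_ext_op_e: "fixpoints E (ext_op \<psi> e P e) = vs.span (insert e (fixpoints K P))"
  unfolding span_insert_subspace[OF subspace_fixpoints[OF subspace_K P]]
proof (intro equalityI subsetI)
  fix w assume "w \<in> fixpoints E (ext_op \<psi> e P e)"
  then have "w \<in> E" and "P (proj_ker \<psi> e w) + scl (\<psi> w) e = proj_ker \<psi> e w + scl (\<psi> w) e"
    by (simp_all add: fixpoints_def ext_op_def)
  then have "P (proj_ker \<psi> e w) = proj_ker \<psi> e w"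
    by (simp only: add_right_cancel)
  then have "proj_ker \<psi> e w \<in> fixpoints K P"
    using proj_ker_in[OF \<open>w \<in> E\<close>] by (simp add: fixpoints_def)
  then show "w \<in> {x. \<exists>c. x - scl c e \<in> fixpoints K P}"
    unfolding proj_ker_def by blast
next
  fix w assume "w \<in> {x. \<exists>c. x - scl c e \<in> fixpoints K P}"
  then obtain c where c: "w - scl c e \<in> K" "P (w - scl c e) = w - scl c e"
    by (auto simp: fixpoints_def)
  then have "w = (w - scl c e) + scl c e" "w \<in> E"
    using add_scl_e_in[of "w - scl c e" c] by auto
  then show "w \<in> fixpoints E (ext_op \<psi> e P e)"
    using ext_op_add_scl_e[OF c(1), of P e c] c(2) by (simp add: fixpoints_def)
qed

lemma \<psi>_ext_op:
  assumes "v \<in> E" "w \<in> E"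
  shows "\<psi> (ext_op \<psi> e P v w) = \<psi> w * \<psi> v"
proof -
  have "P (proj_ker \<psi> e w) \<in> K"
    using P_K proj_ker_in assms(2) by blast
  then show ?thesis
    using assms lin_functional_add[OF subspace functional] lin_functional_scl[OF subspace functional]
      vs.subspace_scale[OF subspace assms(1)]
    by (simp add: ext_op_def)
qed

lemma endo_ext_op_endo: "v \<in> E \<Longrightarrow> endo_on E (ext_op \<psi> e P v)"
  using endo_ext_op[OF lin_on_P] P_K by blast

lemma funpow_ext_op_K:
  assumes "k \<in> K"
  shows "(ext_op \<psi> e P v ^^ n) k = (P ^^ n) k"
proof -
  have "P ` K \<subseteq> K"
    using P_K by blast
  then have "(P ^^ n) k = (ext_op \<psi> e P v ^^ n) k"
    by (rule funpow_cong_on[OF _ _ assms]) (simp add: ext_op_kernel)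
  then show ?thesis ..
qed

lemma stable_powers_ext_op_imp:
  assumes "stable_powers E (ext_op \<psi> e P v)"
  shows "stable_powers K P"
proof -
  obtain N where N: "\<forall>w\<in>E. (ext_op \<psi> e P v ^^ Suc N) w = (ext_op \<psi> e P v ^^ N) w"
    using assms unfolding stable_powers_def by blast
  have "(P ^^ Suc N) k = (P ^^ N) k" if "k \<in> K" for k
    using N that unfolding funpow_ext_op_K[where v = v, OF that, symmetric] by simp
  then show ?thesis
    unfolding stable_powers_def by blast
qed

lemma \<psi>_funpow_ext_op:
  assumes "v \<in> E" "w \<in> E"
  shows "\<psi> ((ext_op \<psi> e P v ^^ n) w) = \<psi> w * \<psi> v ^ n"
proof (induction n)
  case (Suc n)
  have "ext_op \<psi> e P v ` E \<subseteq> E"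
    using endo_ext_op_endo[OF assms(1)] by (simp add: endo_on_def)
  then have "(ext_op \<psi> e P v ^^ n) w \<in> E"
    using assms(2) by (rule funpow_closed)
  then show ?case
    using Suc.IH \<psi>_ext_op[OF assms(1)] by (simp add: mult.assoc)
qed simp

lemma not_stable_powers_ext_op:
  assumes "v \<in> E" "\<psi> v \<noteq> 0" "\<psi> v \<noteq> 1"
  shows "\<not> stable_powers E (ext_op \<psi> e P v)"
proof
  assume "stable_powers E (ext_op \<psi> e P v)"
  then obtain N where "(ext_op \<psi> e P v ^^ Suc N) e = (ext_op \<psi> e P v ^^ N) e"
    using e_in unfolding stable_powers_def by blast
  then have "\<psi> ((ext_op \<psi> e P v ^^ Suc N) e) = \<psi> ((ext_op \<psi> e P v ^^ N) e)"
    by (rule arg_cong)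
  then have "\<psi> v ^ Suc N = \<psi> v ^ N"
    by (simp only: \<psi>_funpow_ext_op[OF assms(1) e_in] \<psi>_e mult_1)
  then have "\<psi> v ^ N * (\<psi> v - 1) = 0"
    by (simp add: algebra_simps)
  then show False
    using assms(2,3) by simp
qed

lemma stable_powers_ext_op_kernel:
  assumes "v \<in> K" "stable_powers K P"
  shows "stable_powers E (ext_op \<psi> e P v)"
proof -
  obtain N where N: "\<forall>k\<in>K. (P ^^ Suc N) k = (P ^^ N) k"
    using assms(2) unfolding stable_powers_def by blast
  have "(ext_op \<psi> e P v ^^ Suc (Suc N)) w = (ext_op \<psi> e P v ^^ Suc N) w" if "w \<in> E" for w
  proof -
    let ?S = "ext_op \<psi> e P v"
    have u: "?S w \<in> K"
      using endo_ext_op_endo \<psi>_ext_op assms(1) that by (auto simp: endo_on_def)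
    have "(?S ^^ Suc (Suc N)) w = (?S ^^ Suc N) (?S w)"
      by (simp only: funpow_Suc_right comp_apply)
    also have "\<dots> = (P ^^ N) (?S w)"
      using N u by (simp only: funpow_ext_op_K)
    also have "\<dots> = (?S ^^ Suc N) w"
      using u by (simp only: funpow_Suc_right comp_apply funpow_ext_op_K)
    finally show ?thesis .
  qed
  then show ?thesis
    unfolding stable_powers_def by blast
qed

lemma fixpoints_ext_op_kernel:
  assumes "v \<in> K"
  shows "fixpoints E (ext_op \<psi> e P v) = fixpoints K P"
proof (intro equalityI subsetI)
  fix w assume "w \<in> fixpoints E (ext_op \<psi> e P v)"
  then have w: "w \<in> E" "ext_op \<psi> e P v w = w"
    by (simp_all add: fixpoints_def)
  then have "\<psi> w = 0"
    using \<psi>_ext_op[of v w] assms by simp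
  then show "w \<in> fixpoints K P"
    using w by (simp add: fixpoints_def ext_op_kernel)
qed (simp add: fixpoints_def ext_op_kernel)

lemma not_stable_powers_ext_op_e:
  assumes "k \<in> K" "k \<notin> (\<lambda>u. u - P u) ` K"
  shows "\<not> stable_powers E (ext_op \<psi> e P (k + e))"
proof
  let ?S = "ext_op \<psi> e P (k + e)"
  have v: "k + e \<in> E" "\<psi> (k + e) = 1"
    using add_scl_e_in[of k 1] \<psi>_add_scl_e[of k 1] assms(1) by simp_all
  assume "stable_powers E ?S"
  then obtain N where N: "\<forall>w\<in>E. (?S ^^ Suc N) w = (?S ^^ N) w"
    unfolding stable_powers_def by blast
  have "?S ` E \<subseteq> E"
    using endo_ext_op_endo[OF v(1)] by (simp add: endo_on_def)
  then have "(?S ^^ N) ` E = fixpoints E ?S"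
    by (rule image_funpow_eq_fixpoints[OF N _ le_refl])
  then have "(?S ^^ N) e \<in> fixpoints E ?S"
    using e_in by blast
  moreover have "\<psi> ((?S ^^ N) e) = 1"
    using \<psi>_funpow_ext_op[OF v(1) e_in] v(2) \<psi>_e by simp
  ultimately obtain f where f: "f \<in> E" "?S f = f" "\<psi> f = 1"
    by (auto simp: fixpoints_def)
  let ?g = "proj_ker \<psi> e f"
  have g: "?g \<in> K" "?g + e = f"
    using f proj_ker_in proj_ker_plus_scl[of \<psi> e f] by simp_all
  have "?S f = P ?g + (k + e)"
    using f(3) by (simp add: ext_op_def)
  then have "P ?g + (k + e) = ?g + e"
    using f(2) g(2) by simp
  then have "k + P ?g = ?g"
    by (simp add: algebra_simps)
  then have "k = ?g - P ?g"
    by (simp add: eq_diff_eq)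
  then show False
    using assms(2) g(1) by blast
qed

text \<open>With \<open>y = e + k\<close> this extension is \<open>P\<close> on \<open>K\<close> and fixes \<open>y\<close>.\<close>

lemma ext_op_shifted_e:
  assumes "k \<in> K" "stable_powers K P"
  shows "stable_powers E (ext_op \<psi> e P (k - P k + e))"
    and "fixpoints E (ext_op \<psi> e P (k - P k + e)) = vs.span (insert (e + k) (fixpoints K P))"
proof -
  interpret y: hyperplane E \<psi> "e + k"
    using assms(1) add_scl_e_in[of k 1] \<psi>_add_scl_e[of k 1]
    by unfold_locales (simp_all add: subspace functional add.commute)
  have cong: "ext_op \<psi> (e + k) P (e + k) w = ext_op \<psi> e P (k - P k + e) w" if "w \<in> E" for w
  proof (rule lin_on_eqI[OF y.lin_on_ext_op[OF lin_on_P] lin_on_ext_op[OF lin_on_P] _ _ that])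
    show "ext_op \<psi> (e + k) P (e + k) e = ext_op \<psi> e P (k - P k + e) e"
      using assms(1) lin_on_neg[OF subspace_K lin_on_P, of k] lin_on_zero[OF subspace_K lin_on_P] \<psi>_e
      by (simp add: ext_op_e[OF lin_on_P] ext_op_def proj_ker_def)
  qed (simp add: ext_op_kernel)
  have endo: "ext_op \<psi> (e + k) P (e + k) ` E \<subseteq> E"
    using y.endo_ext_op[OF lin_on_P] P_K y.e_in by (blast dest: endo_on_def[THEN iffD1])
  show "stable_powers E (ext_op \<psi> e P (k - P k + e))"
    using y.stable_powers_ext_op_e[OF P assms(2)] stable_powers_cong[OF endo cong] by simp
  show "fixpoints E (ext_op \<psi> e P (k - P k + e)) = vs.span (insert (e + k) (fixpoints K P))"
    using y.fixpoints_ext_op_e[OF P] fixpoints_cong[of E, OF cong] by simp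
qed

end

end

context finite_hyperplane
begin

context
  fixes P :: "(nat \<Rightarrow> 'a) \<Rightarrow> (nat \<Rightarrow> 'a)"
  assumes P: "endo_on K P"
begin

lemma mobius_weight_ext_op_shifted_e:
  assumes "u \<in> K" "stable_powers K P"
  shows "mobius_weight E (ext_op \<psi> e P (u - P u + e)) = - int (card (fixpoints K P)) * mobius_weight K P"
proof -
  let ?F = "fixpoints K P" and ?S = "ext_op \<psi> e P (u - P u + e)"
  have sub: "vs.subspace ?F"
    by (rule subspace_fixpoints[OF subspace_K P])
  have fin: "finite ?F"
    using finite by (simp add: fixpoints_def)
  have "u - P u + e \<in> E"
    using add_scl_e_in[of "u - P u" 1] vs.subspace_diff[OF subspace_K assms(1) P_K[OF P assms(1)]] by simp
  moreover have "e + u \<notin> ?F"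
    using \<psi>_add_scl_e[of u 1] assms(1) by (simp add: fixpoints_def add.commute)
  then have "card (fixpoints E ?S) = CARD('a) ^ Suc (vs.dim ?F)"
    using ext_op_shifted_e(2)[OF P assms] card_span_insert[OF sub] card_subspace[OF fin sub] by simp
  ultimately have "vs.dim (fixpoints E ?S) = Suc (vs.dim ?F)"
    using finite subspace_fixpoints[OF subspace endo_ext_op_endo[OF P]]
    by (intro dim_subspace_eqI) (auto simp: fixpoints_def)
  then show ?thesis
    using ext_op_shifted_e(1)[OF P assms] assms(2) card_subspace[OF fin sub]
    by (simp add: mobius_weight_def mu_Suc)
qed

lemma mobius_weight_ext_op_endo:
  assumes "k \<in> K"
  shows "mobius_weight E (ext_op \<psi> e P (k + scl c e)) =
    (if c = 0 then mobius_weight K P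
     else if c = 1 \<and> k \<in> (\<lambda>u. u - P u) ` K then - int (card (fixpoints K P)) * mobius_weight K P
     else 0)"
proof (cases "stable_powers K P")
  case False
  then have "\<not> stable_powers E (ext_op \<psi> e P v)" for v
    using stable_powers_ext_op_imp[OF P] by blast
  then show ?thesis
    using False by (simp add: mobius_weight_def)
next
  case True
  have v: "k + scl c e \<in> E" "\<psi> (k + scl c e) = c"
    using assms add_scl_e_in \<psi>_add_scl_e by simp_all
  consider "c = 0" | "c = 1" "k \<in> (\<lambda>u. u - P u) ` K" | "c = 1" "k \<notin> (\<lambda>u. u - P u) ` K"
    | "c \<noteq> 0" "c \<noteq> 1"
    by blast
  then show ?thesis
  proof cases
    case 1
    then show ?thesis
      using assms stable_powers_ext_op_kernel[OF P assms True] fixpoints_ext_op_kernel[OF P assms]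
      by (simp add: mobius_weight_def True)
  next
    case 2
    then obtain u where u: "u \<in> K" "k = u - P u"
      by blast
    then show ?thesis
      using mobius_weight_ext_op_shifted_e[OF u(1) True] 2 by simp
  next
    case 3
    then show ?thesis
      using not_stable_powers_ext_op_e[OF P assms] by (simp add: mobius_weight_def)
  next
    case 4
    then show ?thesis
      using not_stable_powers_ext_op[OF P v(1)] v(2) by (simp add: mobius_weight_def)
  qed
qed

lemma card_K_eq: "card K = card (fixpoints K P) * card ((\<lambda>u. u - P u) ` K)"
  using card_eq_card_kernel_mult_card_image[OF subspace_K lin_on_id_minus[OF subspace_K lin_on_P[OF P]]] finite
  by (simp add: fixpoints_eq_kernel)

lemma mobius_weight_rank_ext_op_endo:
  assumes "k \<in> K"
  shows "mobius_weight E (ext_op \<psi> e P (k + scl c e)) * \<beta> (vs.dim (ext_op \<psi> e P (k + scl c e) ` E)) =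
    (if c = 0 then mobius_weight K P * \<beta> (if k \<in> P ` K then vs.dim (P ` K) else Suc (vs.dim (P ` K)))
     else 0) +
    (if c = 1 then (if k \<in> (\<lambda>u. u - P u) ` K
                    then - int (card (fixpoints K P)) * mobius_weight K P * \<beta> (Suc (vs.dim (P ` K)))
                    else 0)
     else 0)"
proof -
  have PK: "P ` K \<subseteq> K"
    using P_K[OF P] by blast
  have "k + scl c e \<in> P ` K \<longleftrightarrow> c = 0 \<and> k \<in> P ` K"
    using PK \<psi>_add_scl_e[of k c] assms by auto
  moreover have "P ` K \<subseteq> E" "k + scl c e \<in> E"
    using PK assms add_scl_e_in by auto
  ultimately have "vs.dim (ext_op \<psi> e P (k + scl c e) ` E)
      = (if c = 0 \<and> k \<in> P ` K then vs.dim (P ` K) else Suc (vs.dim (P ` K)))"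
    using dim_image_ext_op[OF lin_on_P[OF P]] by simp
  then show ?thesis
    using mobius_weight_ext_op_endo[OF assms, of c] by auto
qed

lemma sum_mobius_weight_ext_op_endo:
  "(\<Sum>v\<in>E. mobius_weight E (ext_op \<psi> e P v) * \<beta> (vs.dim (ext_op \<psi> e P v ` E))) =
     int (card (P ` K)) * mobius_weight K P * (\<beta> (vs.dim (P ` K)) - \<beta> (Suc (vs.dim (P ` K))))"
proof -
  let ?r = "vs.dim (P ` K)" and ?m = "mobius_weight K P" and ?I = "(\<lambda>u. u - P u) ` K"
  have PK: "P ` K \<subseteq> K" and IK: "?I \<subseteq> K"
    using P_K[OF P] vs.subspace_diff[OF subspace_K] by auto
  have finK: "finite K"
    using finite by simp
  have "(\<Sum>v\<in>E. mobius_weight E (ext_op \<psi> e P v) * \<beta> (vs.dim (ext_op \<psi> e P v ` E)))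
      = (\<Sum>k\<in>K. ?m * \<beta> (if k \<in> P ` K then ?r else Suc ?r))
        + (\<Sum>k\<in>K. if k \<in> ?I then - int (card (fixpoints K P)) * ?m * \<beta> (Suc ?r) else 0)"
    by (simp add: sum_E mobius_weight_rank_ext_op_endo sum.distrib)
  moreover have "(\<Sum>k\<in>K. ?m * \<beta> (if k \<in> P ` K then ?r else Suc ?r))
      = ?m * (int (card (P ` K)) * \<beta> ?r + int (card (K - P ` K)) * \<beta> (Suc ?r))"
    using sum.subset_diff[OF PK finK, of "\<lambda>k. ?m * \<beta> (if k \<in> P ` K then ?r else Suc ?r)"]
    by (simp add: algebra_simps)
  moreover have "(\<Sum>k\<in>K. if k \<in> ?I then - int (card (fixpoints K P)) * ?m * \<beta> (Suc ?r) else 0)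
      = - int (card K) * ?m * \<beta> (Suc ?r)"
    using sum.inter_restrict[OF finK, of "\<lambda>_. - int (card (fixpoints K P)) * ?m * \<beta> (Suc ?r)" ?I]
    by (simp add: Int_absorb1[OF IK] card_K_eq algebra_simps)
  moreover have "int (card (K - P ` K)) = int (card K) - int (card (P ` K))"
    using card_mono[OF finK PK] by (simp add: card_Diff_subset[OF finite_subset[OF PK finK] PK] of_nat_diff)
  ultimately show ?thesis
    by (simp add: algebra_simps)
qed

end

end

section \<open>Vanishing of the Mobius sums\<close>

context hyperplane
begin

lemma inj_on_ext_op:
  assumes P: "lin_on K P" "P ` K \<subseteq> E" and inj: "inj_on P K" and v: "v \<in> E" "v \<notin> P ` K"
  shows "inj_on (ext_op \<psi> e P v) E"
proof -
  have "w = 0" if w: "w \<in> E" "ext_op \<psi> e P v w = 0" for w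
  proof (cases "\<psi> w = 0")
    case True
    then have "P w = P 0"
      using w lin_on_zero[OF subspace_K P(1)] by (simp add: ext_op_kernel)
    then show ?thesis
      using inj_onD[OF inj] w(1) True vs.subspace_0[OF subspace_K] by simp
  next
    case False
    let ?k = "proj_ker \<psi> e w"
    have "P ?k + scl (\<psi> w) v = 0"
      using w(2) by (simp add: ext_op_def)
    then have "scl (\<psi> w) v = - P ?k"
      by (simp add: add_eq_0_iff2)
    then have "scl (1 / \<psi> w) (scl (\<psi> w) v) = scl (1 / \<psi> w) (- P ?k)"
      by simp
    then have "v = scl (- 1 / \<psi> w) (P ?k)"
      using False by (simp add: scl_def fun_eq_iff)
    also have "\<dots> = P (scl (- 1 / \<psi> w) ?k)"
      by (rule lin_on_scl[OF subspace_K P(1) proj_ker_in[OF w(1)], symmetric])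
    finally have "v \<in> P ` K"
      using vs.subspace_scale[OF subspace_K proj_ker_in[OF w(1)]] by blast
    then show ?thesis
      using v(2) by blast
  qed
  then show ?thesis
    using inj_on_iff_kernel[OF subspace lin_on_ext_op[OF P(1)]] by blast
qed

lemma not_stable_powers_ext_op_inj:
  assumes P: "lin_on K P" "P ` K \<subseteq> E" and inj: "inj_on P K"
    and k0: "k0 \<in> K" "P k0 \<notin> K" and v: "v \<in> E" "v \<notin> P ` K"
  shows "\<not> stable_powers E (ext_op \<psi> e P v)"
proof
  assume "stable_powers E (ext_op \<psi> e P v)"
  moreover have "ext_op \<psi> e P v ` E \<subseteq> E"
    using endo_ext_op[OF P v(1)] by (simp add: endo_on_def)
  ultimately have "ext_op \<psi> e P v k0 = k0"
    using inj_on_ext_op[OF P inj v] k0(1) by (intro stable_powers_inj_on_fixes) auto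
  then show False
    using k0 by (simp add: ext_op_kernel)
qed

end

text \<open>The core identity, quantified over all hyperplane decompositions of \<open>E\<close> so that it can be
  proved by induction on \<open>E\<close>.\<close>

definition mobius_sums_vanish :: "(nat \<Rightarrow> 'a::{field,finite}) set \<Rightarrow> bool" where
  "mobius_sums_vanish E \<longleftrightarrow>
     (\<forall>\<psi> e P. finite_hyperplane E \<psi> e \<longrightarrow> lin_on {w\<in>E. \<psi> w = 0} P \<longrightarrow> P ` {w\<in>E. \<psi> w = 0} \<subseteq> E \<longrightarrow>
        (\<Sum>v\<in>E. mobius_weight E (ext_op \<psi> e P v)) = 0)"

lemma mobius_sums_vanishD:
  assumes "mobius_sums_vanish E" "finite_hyperplane E \<psi> e"
    "lin_on {w\<in>E. \<psi> w = 0} P" "P ` {w\<in>E. \<psi> w = 0} \<subseteq> E"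
  shows "(\<Sum>v\<in>E. mobius_weight E (ext_op \<psi> e P v)) = 0"
  using assms unfolding mobius_sums_vanish_def by blast

context finite_hyperplane
begin

text \<open>\<open>ext_op \<psi> e P (P p)\<close> kills \<open>e - p\<close>; factoring out that vector leaves an extension
  problem on \<open>K\<close> for the functional \<open>\<psi> \<circ> P\<close>.\<close>

lemma mobius_weight_ext_op_image:
  assumes P: "lin_on K P" "P ` K \<subseteq> E" and e': "e' \<in> K" "\<psi> (P e') = 1" and p: "p \<in> K"
  shows "mobius_weight E (ext_op \<psi> e P (P p)) = mobius_weight K (ext_op (\<psi> \<circ> P) e' P (P e' - e + p))"
proof -
  let ?S = "ext_op \<psi> e P (P p)"
  interpret y: finite_hyperplane E \<psi> "e - p"
    using subspace functional finite vs.subspace_diff[OF subspace e_in] p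
      lin_functional_diff[OF subspace functional e_in] \<psi>_e
    by unfold_locales simp_all
  have endo: "endo_on E ?S"
    using P p by (intro endo_ext_op) auto
  have "?S (e - p) = 0"
    using p lin_on_neg[OF subspace_K P(1) p] y.\<psi>_e
    by (simp add: ext_op_def proj_ker_def)
  then have "mobius_weight E ?S = mobius_weight K (proj_ker \<psi> (e - p) \<circ> ?S)"
    by (rule y.mobius_weight_compress[OF endo])
  also have "\<dots> = mobius_weight K (ext_op (\<psi> \<circ> P) e' P (P e' - e + p))"
  proof (rule mobius_weight_cong)
    show "(proj_ker \<psi> (e - p) \<circ> ?S) ` K \<subseteq> K"
      using y.endo_compress[OF endo \<open>?S (e - p) = 0\<close>] by (simp add: endo_on_def)
  next
    fix w assume w: "w \<in> K"
    have "P (w - scl (\<psi> (P w)) e') = P w - scl (\<psi> (P w)) (P e')"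
      using lin_on_diff[OF subspace_K P(1) w vs.subspace_scale[OF subspace_K e'(1)]]
        lin_on_scl[OF subspace_K P(1) e'(1)] by simp
    then have "ext_op (\<psi> \<circ> P) e' P (P e' - e + p) w
        = P w - scl (\<psi> (P w)) (P e') + scl (\<psi> (P w)) (P e' - e + p)"
      by (simp add: ext_op_def proj_ker_def)
    also have "\<dots> = P w - scl (\<psi> (P w)) (e - p)"
      by (simp add: scl_def fun_eq_iff algebra_simps)
    finally show "(proj_ker \<psi> (e - p) \<circ> ?S) w = ext_op (\<psi> \<circ> P) e' P (P e' - e + p) w"
      using w by (simp add: ext_op_kernel proj_ker_def)
  qed
  finally show ?thesis .
qed

lemma sum_mobius_weight_ext_op_image:
  assumes P: "lin_on K P" "P ` K \<subseteq> E" and k0: "k0 \<in> K" "P k0 \<notin> K"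
    and vanish: "mobius_sums_vanish K"
  shows "(\<Sum>v\<in>P ` K. mobius_weight E (ext_op \<psi> e P v)) = 0"
proof -
  define e' where "e' = scl (1 / \<psi> (P k0)) k0"
  have PE: "P k \<in> E" if "k \<in> K" for k
    using P(2) that by blast
  have "\<psi> (P k0) \<noteq> 0"
    using k0 PE by auto
  then have e': "e' \<in> K" "\<psi> (P e') = 1"
    using vs.subspace_scale[OF subspace_K k0(1)] lin_on_scl[OF subspace_K P(1) k0(1)]
      lin_functional_scl[OF subspace functional PE[OF k0(1)]]
    by (simp_all add: e'_def)
  interpret K': finite_hyperplane K "\<psi> \<circ> P" e'
    using subspace_K lin_functional_comp[OF subspace_K P functional] e' finite
    by unfold_locales simp_all
  have t: "P e' - e \<in> K"
    using lin_functional_diff[OF subspace functional PE[OF e'(1)] e_in] e'(2) \<psi>_e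
      vs.subspace_diff[OF subspace PE[OF e'(1)] e_in]
    by simp
  have "(\<Sum>p\<in>K. mobius_weight E (ext_op \<psi> e P (P p)))
      = (\<Sum>p\<in>K. mobius_weight K (ext_op (\<psi> \<circ> P) e' P (P e' - e + p)))"
    using mobius_weight_ext_op_image[OF P e'] by simp
  also have "\<dots> = (\<Sum>v\<in>K. mobius_weight K (ext_op (\<psi> \<circ> P) e' P v))"
    by (rule sum_translate_subspace[OF subspace_K t])
  also have "\<dots> = 0"
  proof (rule mobius_sums_vanishD[OF vanish K'.finite_hyperplane_axioms])
    show "lin_on {w\<in>K. (\<psi> \<circ> P) w = 0} P"
      by (rule lin_on_subset[OF P(1)]) blast
    show "P ` {w\<in>K. (\<psi> \<circ> P) w = 0} \<subseteq> K"
      using PE by auto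
  qed
  finally show ?thesis
    using finite by (intro sum_image_eq_zero[OF subspace_K P(1)]) simp_all
qed

lemma sum_mobius_weight_ext_op_inj:
  assumes P: "lin_on K P" "P ` K \<subseteq> E" and inj: "inj_on P K" and k0: "k0 \<in> K" "P k0 \<notin> K"
    and vanish: "mobius_sums_vanish K"
  shows "(\<Sum>v\<in>E. mobius_weight E (ext_op \<psi> e P v)) = 0"
proof -
  have "(\<Sum>v\<in>E - P ` K. mobius_weight E (ext_op \<psi> e P v)) = 0"
    using not_stable_powers_ext_op_inj[OF P inj k0] by (simp add: mobius_weight_def)
  then show ?thesis
    using sum_mobius_weight_ext_op_image[OF P k0 vanish]
      sum.subset_diff[OF P(2) finite, of "\<lambda>v. mobius_weight E (ext_op \<psi> e P v)"]
    by simp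
qed

lemma mobius_weight_ext_op_kernel:
  assumes P: "lin_on K P" "P ` K \<subseteq> E" and z: "z \<in> K" "P z = 0"
    and \<phi>: "lin_functional E \<phi>" "\<phi> z = 1" and v: "v \<in> E"
  shows "mobius_weight E (ext_op \<psi> e P v)
    = mobius_weight {w\<in>E. \<phi> w = 0} (ext_op \<psi> e (proj_ker \<phi> z \<circ> P) (proj_ker \<phi> z v))"
proof -
  interpret hz: finite_hyperplane E \<phi> z
    using subspace \<phi> z(1) finite by unfold_locales simp_all
  let ?S = "ext_op \<psi> e P v"
  have endo: "endo_on E ?S"
    by (rule endo_ext_op[OF P v])
  have "?S z = P z"
    using z(1) by (simp add: ext_op_kernel)
  then have "?S z = 0"
    using z(2) by simp
  then have "mobius_weight E ?S = mobius_weight hz.K (proj_ker \<phi> z \<circ> ?S)"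
    by (rule hz.mobius_weight_compress[OF endo])
  also have "\<dots> = mobius_weight hz.K (ext_op \<psi> e (proj_ker \<phi> z \<circ> P) (proj_ker \<phi> z v))"
  proof (rule mobius_weight_cong)
    show "(proj_ker \<phi> z \<circ> ?S) ` hz.K \<subseteq> hz.K"
      using hz.endo_compress[OF endo \<open>?S z = 0\<close>] by (simp add: endo_on_def)
  next
    fix w assume "w \<in> hz.K"
    then have "P (proj_ker \<psi> e w) \<in> E" "scl (\<psi> w) v \<in> E"
      using P(2) proj_ker_in vs.subspace_scale[OF subspace v] by auto
    then show "(proj_ker \<phi> z \<circ> ?S) w = ext_op \<psi> e (proj_ker \<phi> z \<circ> P) (proj_ker \<phi> z v) w"
      using lin_on_add[OF subspace hz.lin_on_proj_ker] lin_on_scl[OF subspace hz.lin_on_proj_ker v]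
      by (simp add: ext_op_def)
  qed
  finally show ?thesis .
qed

lemma sum_mobius_weight_ext_op_kernel:
  assumes P: "lin_on K P" "P ` K \<subseteq> E" and z: "z \<in> K" "z \<noteq> 0" "P z = 0"
    and vanish: "\<And>H. H \<subset> E \<Longrightarrow> mobius_sums_vanish H"
  shows "(\<Sum>v\<in>E. mobius_weight E (ext_op \<psi> e P v)) = 0"
proof -
  obtain \<phi> where \<phi>: "lin_functional E \<phi>" "\<phi> z = 1" "\<phi> e = 0"
    using functional_separating[OF z(1,2)] .
  interpret hz: finite_hyperplane E \<phi> z
    using subspace \<phi> z(1) finite by unfold_locales simp_all
  let ?H = "{w\<in>E. \<phi> w = 0}" and ?P = "proj_ker \<phi> z \<circ> P"
  interpret H: finite_hyperplane ?H \<psi> e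
    using hz.subspace_K lin_functional_subset[OF functional] e_in \<psi>_e \<phi>(3) finite
    by unfold_locales auto
  have P': "lin_on H.K ?P" "?P ` H.K \<subseteq> ?H"
    using lin_on_comp[OF H.subspace_K lin_on_subset[OF P(1)] _ hz.lin_on_proj_ker] P(2) hz.proj_ker_in
    by auto
  have "z \<notin> ?H"
    using \<phi>(2) by simp
  then have "?H \<subset> E"
    using hz.e_in by blast
  then have "(\<Sum>h\<in>?H. mobius_weight ?H (ext_op \<psi> e ?P h)) = 0"
    by (rule mobius_sums_vanishD[OF vanish H.finite_hyperplane_axioms P'])
  moreover have "(\<Sum>v\<in>E. mobius_weight E (ext_op \<psi> e P v))
      = (\<Sum>h\<in>?H. \<Sum>c\<in>UNIV. mobius_weight ?H (ext_op \<psi> e ?P (proj_ker \<phi> z (h + scl c z))))"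
    using mobius_weight_ext_op_kernel[OF P z(1,3) \<phi>(1,2)] by (simp add: hz.sum_E hz.add_scl_e_in)
  ultimately show ?thesis
    by (simp add: hz.proj_ker_add_scl_e sum_distrib_left[symmetric])
qed

end

theorem mobius_sums_vanish:
  fixes E :: "(nat \<Rightarrow> 'a::{field,finite}) set"
  assumes "finite E"
  shows "mobius_sums_vanish E"
  using assms
proof (induction E rule: finite_psubset_induct)
  case (psubset E)
  show ?case
    unfolding mobius_sums_vanish_def
  proof (intro allI impI)
    fix \<psi> e P
    assume fh: "finite_hyperplane E \<psi> e"
      and P: "lin_on {w\<in>E. \<psi> w = 0} P" "P ` {w\<in>E. \<psi> w = 0} \<subseteq> E"
    interpret finite_hyperplane E \<psi> e
      by (rule fh)
    consider "P ` K \<subseteq> K" | "inj_on P K" "\<not> P ` K \<subseteq> K" | z where "z \<in> K" "z \<noteq> 0" "P z = 0"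
      using inj_on_iff_kernel[OF subspace_K P(1)] by blast
    then show "(\<Sum>v\<in>E. mobius_weight E (ext_op \<psi> e P v)) = 0"
    proof cases
      case 1
      then have "endo_on K P"
        using P by (simp add: endo_on_def)
      then show ?thesis
        using sum_mobius_weight_ext_op_endo[of P "\<lambda>_. 1"] by simp
    next
      case 2
      then obtain k0 where "k0 \<in> K" "P k0 \<notin> K"
        by blast
      then show ?thesis
        using sum_mobius_weight_ext_op_inj[OF P 2(1)] psubset.IH[OF K_psubset] by blast
    next
      case 3
      then show ?thesis
        using sum_mobius_weight_ext_op_kernel[OF P] psubset.IH by blast
    qed
  qed
qed

context finite_hyperplane
begin

lemma sum_mobius_weight_ext_op:
  "lin_on K P \<Longrightarrow> P ` K \<subseteq> E \<Longrightarrow> (\<Sum>v\<in>E. mobius_weight E (ext_op \<psi> e P v)) = 0"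
  by (rule mobius_sums_vanishD[OF mobius_sums_vanish[OF finite] finite_hyperplane_axioms])

end

section \<open>Rank-weighted sums\<close>

definition qbinom_weight :: "int \<Rightarrow> nat \<Rightarrow> nat \<Rightarrow> nat \<Rightarrow> int" where
  "qbinom_weight q j d x = (if x \<le> j then qbinom q (d - x) (j - x) else 0)"

lemma qbinom_weight_diff:
  assumes "x \<le> d"
  shows "q ^ x * (qbinom_weight q j (Suc d) x - qbinom_weight q j (Suc d) (Suc x)) = q ^ j * qbinom_weight q j d x"
proof (cases "x < j")
  case True
  define a b where "a = d - x" and "b = j - Suc x"
  have ab: "Suc d - x = Suc a" "Suc d - Suc x = a" "d - x = a" "j - x = Suc b" "j - Suc x = b" "x + Suc b = j"
    using assms True by (simp_all add: a_def b_def)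
  have "qbinom_weight q j (Suc d) x - qbinom_weight q j (Suc d) (Suc x) = q ^ Suc b * qbinom q a (Suc b)"
    using True by (simp add: qbinom_weight_def ab)
  moreover have "q ^ x * q ^ Suc b = q ^ j"
    by (simp only: ab(6) power_add[symmetric])
  ultimately show ?thesis
    using True by (simp add: qbinom_weight_def ab mult.assoc[symmetric])
next
  case False
  then show ?thesis
    by (cases "x = j") (simp_all add: qbinom_weight_def)
qed

definition h_weight :: "nat \<Rightarrow> (nat \<Rightarrow> 'a::{field,finite}) set \<Rightarrow> ((nat \<Rightarrow> 'a) \<Rightarrow> (nat \<Rightarrow> 'a)) \<Rightarrow> int" where
  "h_weight j E S = mobius_weight E S * qbinom_weight CARD('a) j (vs.dim E) (vs.dim (S ` E))"

lemma h_weight_cong: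
  assumes "S ` E \<subseteq> E" "\<And>w. w \<in> E \<Longrightarrow> S w = S' w"
  shows "h_weight j E S = h_weight j E S'"
proof -
  have "S ` E = S' ` E"
    by (rule image_cong[OF refl assms(2)])
  then show ?thesis
    unfolding h_weight_def using mobius_weight_cong[OF assms] by simp
qed

context finite_hyperplane
begin

lemma sum_mobius_weight_ext_op_rank:
  assumes P: "lin_on K P" "P ` K \<subseteq> E"
  shows "(\<Sum>v\<in>E. mobius_weight E (ext_op \<psi> e P v) * \<beta> (vs.dim (ext_op \<psi> e P v ` E))) =
    (if P ` K \<subseteq> K
     then int (card (P ` K)) * mobius_weight K P * (\<beta> (vs.dim (P ` K)) - \<beta> (Suc (vs.dim (P ` K))))
     else 0)"
proof (cases "P ` K \<subseteq> K")
  case True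
  then show ?thesis
    using sum_mobius_weight_ext_op_endo[of P \<beta>] P by (simp add: endo_on_def)
next
  case False
  then obtain k0 where k0: "k0 \<in> K" "P k0 \<notin> K"
    by blast
  let ?m = "\<lambda>v. mobius_weight E (ext_op \<psi> e P v)" and ?r = "vs.dim (P ` K)"
  have image: "(\<Sum>v\<in>P ` K. ?m v) = 0"
    using finite by (intro sum_mobius_weight_ext_op_image[OF P k0] mobius_sums_vanish) simp
  have "(\<Sum>v\<in>E - P ` K. ?m v) = 0"
    using sum_mobius_weight_ext_op[OF P] image sum.subset_diff[OF P(2) finite, of ?m] by simp
  moreover have "(\<Sum>v\<in>E - P ` K. ?m v * \<beta> (vs.dim (ext_op \<psi> e P v ` E)))
      = (\<Sum>v\<in>E - P ` K. ?m v) * \<beta> (Suc ?r)"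
    unfolding sum_distrib_right using dim_image_ext_op[OF P] by (intro sum.cong) auto
  moreover have "(\<Sum>v\<in>P ` K. ?m v * \<beta> (vs.dim (ext_op \<psi> e P v ` E))) = (\<Sum>v\<in>P ` K. ?m v) * \<beta> ?r"
    unfolding sum_distrib_right using dim_image_ext_op[OF P] P(2) by (intro sum.cong) auto
  moreover have "(\<Sum>v\<in>E. ?m v * \<beta> (vs.dim (ext_op \<psi> e P v ` E)))
      = (\<Sum>v\<in>E - P ` K. ?m v * \<beta> (vs.dim (ext_op \<psi> e P v ` E)))
        + (\<Sum>v\<in>P ` K. ?m v * \<beta> (vs.dim (ext_op \<psi> e P v ` E)))"
    by (rule sum.subset_diff[OF P(2) finite])
  ultimately show ?thesis
    using False image by simp
qed

lemma sum_h_weight_ext_op: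
  assumes P: "lin_on K P" "P ` K \<subseteq> E"
  shows "(\<Sum>v\<in>E. h_weight j E (ext_op \<psi> e P v)) = (if P ` K \<subseteq> K then CARD('a) ^ j * h_weight j K P else 0)"
proof -
  let ?r = "vs.dim (P ` K)" and ?q = "int CARD('a)"
  let ?\<beta> = "qbinom_weight ?q j (vs.dim E)"
  have sum: "(\<Sum>v\<in>E. h_weight j E (ext_op \<psi> e P v))
      = (\<Sum>v\<in>E. mobius_weight E (ext_op \<psi> e P v) * ?\<beta> (vs.dim (ext_op \<psi> e P v ` E)))"
    by (simp add: h_weight_def)
  show ?thesis
  proof (cases "P ` K \<subseteq> K")
    case False
    then show ?thesis
      using sum sum_mobius_weight_ext_op_rank[OF P, of ?\<beta>] by simp
  next
    case True
    have finK: "finite K"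
      using finite by simp
    have card: "card (P ` K) = CARD('a) ^ ?r"
      using finK by (intro card_subspace[OF _ subspace_lin_on_image[OF subspace_K P(1)]]) simp
    have "?r \<le> vs.dim K"
      by (rule dim_le_subspace[OF finK subspace_lin_on_image[OF subspace_K P(1)] subspace_K True])
    then have diff: "?q ^ ?r * (?\<beta> ?r - ?\<beta> (Suc ?r)) = ?q ^ j * qbinom_weight ?q j (vs.dim K) ?r"
      unfolding dim_E by (rule qbinom_weight_diff)
    have "int (card (P ` K)) * mobius_weight K P * (?\<beta> ?r - ?\<beta> (Suc ?r))
        = mobius_weight K P * (?q ^ ?r * (?\<beta> ?r - ?\<beta> (Suc ?r)))"
      by (simp add: card)
    also have "\<dots> = ?q ^ j * h_weight j K P"
      by (simp only: diff h_weight_def mult.left_commute)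
    finally show ?thesis
      using True sum sum_mobius_weight_ext_op_rank[OF P, of ?\<beta>] by simp
  qed
qed

lemma sum_h_weight_endos:
  "(\<Sum>S\<in>{S. endo_on E S \<and> S \<in> extensional E \<and> Q (restrict S K)}. h_weight j E S)
     = CARD('a) ^ j * (\<Sum>P\<in>{P. endo_on K P \<and> P \<in> extensional K \<and> Q P}. h_weight j K P)"
proof -
  let ?Ps = "{P. lin_on K P \<and> P ` K \<subseteq> E \<and> P \<in> extensional K \<and> Q P}"
  have "?Ps \<subseteq> K \<rightarrow>\<^sub>E E"
    by (auto simp: PiE_iff extensional_def)
  moreover have "finite (K \<rightarrow>\<^sub>E E)"
    using finite by (intro finite_PiE) simp_all
  ultimately have finPs: "finite ?Ps"
    by (rule finite_subset)
  have "(\<Sum>S\<in>{S. endo_on E S \<and> S \<in> extensional E \<and> Q (restrict S K)}. h_weight j E S)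
      = (\<Sum>P\<in>?Ps. \<Sum>v\<in>E. h_weight j E (restrict (ext_op \<psi> e P v) E))"
    by (rule sum_extensional_endos)
  also have "\<dots> = (\<Sum>P\<in>?Ps. if P ` K \<subseteq> K then CARD('a) ^ j * h_weight j K P else 0)"
  proof (rule sum.cong[OF refl])
    fix P assume P: "P \<in> ?Ps"
    have "h_weight j E (restrict (ext_op \<psi> e P v) E) = h_weight j E (ext_op \<psi> e P v)" if "v \<in> E" for v
      using endo_ext_op[of P v] P that by (intro h_weight_cong) (auto simp: endo_on_def)
    then show "(\<Sum>v\<in>E. h_weight j E (restrict (ext_op \<psi> e P v) E))
        = (if P ` K \<subseteq> K then CARD('a) ^ j * h_weight j K P else 0)"
      using sum_h_weight_ext_op[of P j] P by simp
  qed
  also have "\<dots> = CARD('a) ^ j * (\<Sum>P\<in>{P \<in> ?Ps. P ` K \<subseteq> K}. h_weight j K P)"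
    unfolding sum.inter_filter[OF finPs] sum_distrib_left by (rule sum.cong) simp_all
  also have "{P \<in> ?Ps. P ` K \<subseteq> K} = {P. endo_on K P \<and> P \<in> extensional K \<and> Q P}"
    by (auto simp: endo_on_def)
  finally show ?thesis .
qed

end

lemma subspace_V: "vs.subspace (V m)"
  unfolding vs.subspace_def V_def by (simp add: scl_def)

lemma V_mono: "r \<le> m \<Longrightarrow> V r \<subseteq> V m"
  unfolding V_def by auto

lemma finite_V: "finite (V m :: (nat \<Rightarrow> 'a::{zero,finite}) set)"
proof -
  have "V m \<subseteq> (\<lambda>f i. if i < m then f i else 0) ` ({..<m} \<rightarrow>\<^sub>E (UNIV :: 'a set))"
  proof
    fix v :: "nat \<Rightarrow> 'a" assume "v \<in> V m"
    then have "v = (\<lambda>i. if i < m then restrict v {..<m} i else 0)"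
      by (auto simp: V_def fun_eq_iff)
    then show "v \<in> (\<lambda>f i. if i < m then f i else 0) ` ({..<m} \<rightarrow>\<^sub>E UNIV)"
      by (intro image_eqI[where x = "restrict v {..<m}"]) simp_all
  qed
  then show ?thesis
    by (rule finite_subset) (simp add: finite_PiE)
qed

lemma kernel_coordinate_V: "{w \<in> V (Suc k). w k = 0} = V k"
  unfolding V_def by (auto simp: le_Suc_eq) (metis le_antisym not_less_eq_eq)

lemma finite_hyperplane_V:
  "finite_hyperplane (V (Suc k) :: (nat \<Rightarrow> 'a::{field,finite}) set) (\<lambda>w. w k) (\<lambda>i. if i = k then 1 else 0)"
proof -
  have "(\<lambda>i. if i = k then 1 else 0) \<in> (V (Suc k) :: (nat \<Rightarrow> 'a) set)"
    by (simp add: V_def)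
  then show ?thesis
    using subspace_V finite_V
    by unfold_locales (simp_all add: lin_functional_def scl_def)
qed

lemma dim_V: "vs.dim (V m :: (nat \<Rightarrow> 'a::{field,finite}) set) = m"
proof (induction m)
  case 0
  have "V 0 = {0 :: nat \<Rightarrow> 'a}"
    by (auto simp: V_def fun_eq_iff)
  then have "card (V 0 :: (nat \<Rightarrow> 'a) set) = CARD('a) ^ 0"
    by simp
  then show ?case
    by (rule dim_subspace_eqI[OF finite_V subspace_V])
next
  case (Suc m)
  interpret finite_hyperplane "V (Suc m) :: (nat \<Rightarrow> 'a) set" "\<lambda>w. w m" "\<lambda>i. if i = m then 1 else 0"
    by (rule finite_hyperplane_V)
  show ?case
    using dim_E Suc.IH by (simp add: kernel_coordinate_V)
qed

definition ops_extending :: "nat \<Rightarrow> nat \<Rightarrow> ((nat \<Rightarrow> 'a) \<Rightarrow> (nat \<Rightarrow> 'a)) \<Rightarrow> ((nat \<Rightarrow> 'a::field) \<Rightarrow> (nat \<Rightarrow> 'a)) set"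
where
  "ops_extending m r T = {S \<in> ops m. \<forall>v\<in>V r. S v = T v}"

lemma finite_ops_extending: "finite (ops_extending m r (T :: (nat \<Rightarrow> 'a::{field,finite}) \<Rightarrow> (nat \<Rightarrow> 'a)))"
proof -
  have "ops_extending m r T \<subseteq> V m \<rightarrow>\<^sub>E V m"
    by (auto simp: ops_extending_def ops_def PiE_iff extensional_def)
  then show ?thesis
    using finite_subset finite_PiE[OF finite_V, of m "\<lambda>_. V m"] finite_V by blast
qed

lemma h_eq_sum_h_weight:
  fixes T :: "(nat \<Rightarrow> 'a::{field,finite}) \<Rightarrow> (nat \<Rightarrow> 'a)"
  shows "h n r l j T = CARD('a) ^ (l * j) * (\<Sum>S\<in>ops_extending (n - l) r T. h_weight j (V (n - l)) S)"
proof -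
  let ?m = "n - l" and ?q = "int CARD('a)"
  let ?c = "\<lambda>S. semi_idem (V ?m) (V ?m) S \<and> rk (V ?m) S \<le> j"
  define f :: "((nat \<Rightarrow> 'a) \<Rightarrow> (nat \<Rightarrow> 'a)) \<Rightarrow> int"
    where "f S = mu ?q (srk (V ?m) S) * qbinom ?q (?m - rk (V ?m) S) (j - rk (V ?m) S)" for S
  have "{S \<in> ops ?m. ?c S \<and> (\<forall>v\<in>V r. S v = T v)} = {S \<in> ops_extending ?m r T. ?c S}"
    by (auto simp: ops_extending_def)
  then have "h n r l j T = ?q ^ (l * j) * (\<Sum>S\<in>{S \<in> ops_extending ?m r T. ?c S}. f S)"
    unfolding h_def Let_def f_def by simp
  also have "(\<Sum>S\<in>{S \<in> ops_extending ?m r T. ?c S}. f S) = (\<Sum>S\<in>ops_extending ?m r T. h_weight j (V ?m) S)"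
    unfolding sum.inter_filter[OF finite_ops_extending]
  proof (rule sum.cong[OF refl])
    fix S assume "S \<in> ops_extending ?m r T"
    then have SV: "S ` V ?m \<subseteq> V ?m"
      by (simp add: ops_extending_def ops_def)
    show "(if ?c S then f S else 0) = h_weight j (V ?m) S"
      using semi_idem_iff_stable_powers[OF SV] srk_eq_dim_fixpoints[OF SV]
      by (simp add: f_def h_weight_def mobius_weight_def qbinom_weight_def rk_def dim_V)
  qed
  finally show ?thesis
    by simp
qed

lemma sum_h_weight_ops_extending_Suc:
  fixes T :: "(nat \<Rightarrow> 'a::{field,finite}) \<Rightarrow> (nat \<Rightarrow> 'a)"
  assumes "r \<le> k"
  shows "(\<Sum>S\<in>ops_extending (Suc k) r T. h_weight j (V (Suc k)) S)
    = CARD('a) ^ j * (\<Sum>S\<in>ops_extending k r T. h_weight j (V k) S)"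
proof -
  interpret finite_hyperplane "V (Suc k) :: (nat \<Rightarrow> 'a) set" "\<lambda>w. w k" "\<lambda>i. if i = k then 1 else 0"
    by (rule finite_hyperplane_V)
  let ?Q = "\<lambda>P. \<forall>v\<in>V r. P v = T v"
  have K: "K = V k"
    by (rule kernel_coordinate_V)
  have "V r \<subseteq> K"
    using V_mono[OF assms] K by simp
  then have "ops_extending (Suc k) r T
      = {S. endo_on (V (Suc k)) S \<and> S \<in> extensional (V (Suc k)) \<and> ?Q (restrict S K)}"
    by (auto simp: ops_extending_def ops_def endo_on_def)
  moreover have "ops_extending k r T = {P. endo_on K P \<and> P \<in> extensional K \<and> ?Q P}"
    unfolding K by (auto simp: ops_extending_def ops_def endo_on_def)
  ultimately show ?thesis
    using sum_h_weight_endos[where Q = ?Q and j = j] K by simp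
qed

lemma h_Suc:
  fixes T :: "(nat \<Rightarrow> 'a::{field,finite}) \<Rightarrow> (nat \<Rightarrow> 'a)"
  assumes "Suc l \<le> n - r"
  shows "h n r (Suc l) j T = h n r l j T"
proof -
  define k where "k = n - Suc l"
  have k: "n - l = Suc k" "r \<le> k"
    using assms by (simp_all add: k_def)
  have "h n r (Suc l) j T = int CARD('a) ^ (Suc l * j) * (\<Sum>S\<in>ops_extending k r T. h_weight j (V k) S)"
    by (simp add: h_eq_sum_h_weight k_def)
  also have "\<dots> = int CARD('a) ^ (l * j) * (\<Sum>S\<in>ops_extending (Suc k) r T. h_weight j (V (Suc k)) S)"
    by (simp add: sum_h_weight_ops_extending_Suc[OF k(2)] power_add)
  also have "\<dots> = h n r l j T"
    by (simp add: h_eq_sum_h_weight k(1))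
  finally show ?thesis .
qed

theorem proposition3p6:
  fixes T :: "(nat \<Rightarrow> 'a::{field,finite}) \<Rightarrow> (nat \<Rightarrow> 'a)"
    and n r j l1 l2 :: nat
  assumes "r \<le> n"
    and "lin_on (V r) T" and "T ` V r \<subseteq> V n"
    and "semi_idem (V n) (V r) T"
    and "j \<le> r" and "l1 \<le> n - r" and "l2 \<le> n - r"
  shows "h n r l1 j T = h n r l2 j T"
proof -
  have "h n r l j T = h n r 0 j T" if "l \<le> n - r" for l
    using that
  proof (induction l)
    case (Suc l)
    then show ?case
      using h_Suc[of l n r j T] by simp
  qed simp
  then show ?thesis
    using assms(6,7) by metis
qed

end
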